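(* Let $X$ be a Fréchet space and $(T(t))_{t\geqslant0}$ an exponentially equicontinuous $C_0$-semigroup on $X$ with generator $(A,D(A))$, and assume that $\{A^n\}_{n\in\mathbb{N}_0}\subseteq L(X)$ is equicontinuous (in particular $D(A)=X$ and $A\in L(X)$). Then $\operatorname{s}(A)=\log\operatorname{r}(T(1))$.
   Context: A Fréchet space is a complete metrizable locally convex space; $L(X)$ is the space of continuous linear maps $X\to X$. A set of operators is equicontinuous if for every continuous seminorm $q$ there exist a continuous seminorm $p$ and $C\geqslant0$ with $q(Sx)\leqslant Cp(x)$ for all $S$ in the set and all $x$. A $C_0$-semigroup is a family $(T(t))_{t\geqslant0}\subseteq L(X)$ with $T(0)=\mathrm{id}_X$, $T(t+s)=T(t)T(s)$ and $t\mapsto T(t)x$ continuous for each $x$; it is exponentially equicontinuous if $\{e^{-\omega t}T(t)\}_{t\geqslant0}$ is equicontinuous for some $\omega\in\mathbb{R}$. Its generator is $Ax=\lim_{t\searrow0}\frac{T(t)x-x}{t}$ on $D(A)=\{x: \text{this limit exists}\}$. Let $L(X)_0$ be the set of $B\in L(X)$ such that $\{(\mu B)^n\}_{n\in\mathbb{N}_0}$ is equicontinuous for some $\mu\in\mathbb{C}\setminus\{0\}$. For a linear operator $B\colon D(B)\to X$ put $\delta_B=\{\infty\}$ if $D(B)=X$ and $B\in L(X)_0$, and $\delta_B=\varnothing$ otherwise; $\rho(B)=\{\lambda\in\mathbb{C}: \lambda-B\colon D(B)\to X\text{ bijective and }(\lambda-B)^{-1}\in L(X)_0\}\cup\delta_B$;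 $\sigma(B)=(\mathbb{C}\cup\{\infty\})\setminus\rho(B)$. The spectral bound is $\operatorname{s}(B)=\sup\{\operatorname{Re}\lambda:\lambda\in\sigma(B)\cap\mathbb{C}\}$ and, for $B\in L(X)$, the spectral radius is $\operatorname{r}(B)=\sup\{|\lambda|:\lambda\in\sigma(B)\}$ with the convention $|\infty|=+\infty$. *)

theory Defs
  imports "HOL-Analysis.Analysis"
begin

text \<open>A complex Frechet space is modelled by a type 'a with a complex scalar
multiplication sc and a countable, increasing, separating family P of seminorms
such that the induced uniform structure is complete.\<close>

definition is_seminorm :: "(complex \<Rightarrow> 'a::ab_group_add \<Rightarrow> 'a) \<Rightarrow> ('a \<Rightarrow> real) \<Rightarrow> bool" where
  "is_seminorm sc q \<longleftrightarrow> (\<forall>c x. q (sc c x) = cmod c * q x) \<and> (\<forall>x y. q (x + y) \<le> q x + q y)"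

definition frechet :: "(complex \<Rightarrow> 'a::ab_group_add \<Rightarrow> 'a) \<Rightarrow> (nat \<Rightarrow> 'a \<Rightarrow> real) \<Rightarrow> bool" where
  "frechet sc P \<longleftrightarrow> vector_space sc
     \<and> (\<forall>n. is_seminorm sc (P n))
     \<and> (\<forall>n x. P n x \<le> P (Suc n) x)
     \<and> (\<forall>x. (\<forall>n. P n x = 0) \<longrightarrow> x = 0)
     \<and> (\<forall>u :: nat \<Rightarrow> 'a.
          (\<forall>n \<epsilon>. \<epsilon> > 0 \<longrightarrow> (\<exists>N. \<forall>i\<ge>N. \<forall>j\<ge>N. P n (u i - u j) < \<epsilon>))
          \<longrightarrow> (\<exists>x. \<forall>n. (\<lambda>i. P n (u i - x)) \<longlonglongrightarrow> 0))"

definition cont_seminorm :: "(complex \<Rightarrow> 'a::ab_group_add \<Rightarrow> 'a) \<Rightarrow> (nat \<Rightarrow> 'a \<Rightarrow> real) \<Rightarrow> ('a \<Rightarrow> real) \<Rightarrow> bool" where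
  "cont_seminorm sc P q \<longleftrightarrow> is_seminorm sc q \<and> (\<exists>n C. \<forall>x. q x \<le> C * P n x)"

definition equicont :: "(complex \<Rightarrow> 'a::ab_group_add \<Rightarrow> 'a) \<Rightarrow> (nat \<Rightarrow> 'a \<Rightarrow> real) \<Rightarrow> ('a \<Rightarrow> 'a) set \<Rightarrow> bool" where
  "equicont sc P S \<longleftrightarrow> (\<forall>q. cont_seminorm sc P q \<longrightarrow>
      (\<exists>p C. cont_seminorm sc P p \<and> C \<ge> 0 \<and> (\<forall>B\<in>S. \<forall>x. q (B x) \<le> C * p x)))"

definition Lop :: "(complex \<Rightarrow> 'a::ab_group_add \<Rightarrow> 'a) \<Rightarrow> (nat \<Rightarrow> 'a \<Rightarrow> real) \<Rightarrow> ('a \<Rightarrow> 'a) set" where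
  "Lop sc P = {B. Vector_Spaces.linear sc sc B \<and> equicont sc P {B}}"

definition ftends :: "(complex \<Rightarrow> 'a::ab_group_add \<Rightarrow> 'a) \<Rightarrow> (nat \<Rightarrow> 'a \<Rightarrow> real) \<Rightarrow> ('b \<Rightarrow> 'a) \<Rightarrow> 'a \<Rightarrow> 'b filter \<Rightarrow> bool" where
  "ftends sc P f x F \<longleftrightarrow> (\<forall>n. ((\<lambda>t. P n (f t - x)) \<longlongrightarrow> 0) F)"

definition c0_semigroup :: "(complex \<Rightarrow> 'a::ab_group_add \<Rightarrow> 'a) \<Rightarrow> (nat \<Rightarrow> 'a \<Rightarrow> real) \<Rightarrow> (real \<Rightarrow> 'a \<Rightarrow> 'a) \<Rightarrow> bool" where
  "c0_semigroup sc P T \<longleftrightarrow> (\<forall>t\<ge>0. T t \<in> Lop sc P) \<and> T 0 = id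
     \<and> (\<forall>t s. t \<ge> 0 \<longrightarrow> s \<ge> 0 \<longrightarrow> T (t + s) = T t \<circ> T s)
     \<and> (\<forall>x. \<forall>t\<ge>0. ftends sc P (\<lambda>s. T s x) (T t x) (at t within {0..}))"

definition exp_equicont :: "(complex \<Rightarrow> 'a::ab_group_add \<Rightarrow> 'a) \<Rightarrow> (nat \<Rightarrow> 'a \<Rightarrow> real) \<Rightarrow> (real \<Rightarrow> 'a \<Rightarrow> 'a) \<Rightarrow> bool" where
  "exp_equicont sc P T \<longleftrightarrow> (\<exists>\<omega>::real. equicont sc P {(\<lambda>x. sc (complex_of_real (exp (- \<omega> * t))) (T t x)) | t. t \<ge> 0})"

definition gen_dom :: "(complex \<Rightarrow> 'a::ab_group_add \<Rightarrow> 'a) \<Rightarrow> (nat \<Rightarrow> 'a \<Rightarrow> real) \<Rightarrow> (real \<Rightarrow> 'a \<Rightarrow> 'a) \<Rightarrow> 'a set" where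
  "gen_dom sc P T = {x. \<exists>y. ftends sc P (\<lambda>t. sc (complex_of_real (1 / t)) (T t x - x)) y (at_right 0)}"

definition gen :: "(complex \<Rightarrow> 'a::ab_group_add \<Rightarrow> 'a) \<Rightarrow> (nat \<Rightarrow> 'a \<Rightarrow> real) \<Rightarrow> (real \<Rightarrow> 'a \<Rightarrow> 'a) \<Rightarrow> 'a \<Rightarrow> 'a" where
  "gen sc P T x = (THE y. ftends sc P (\<lambda>t. sc (complex_of_real (1 / t)) (T t x - x)) y (at_right 0))"

definition L0 :: "(complex \<Rightarrow> 'a::ab_group_add \<Rightarrow> 'a) \<Rightarrow> (nat \<Rightarrow> 'a \<Rightarrow> real) \<Rightarrow> ('a \<Rightarrow> 'a) set" where
  "L0 sc P = {B \<in> Lop sc P. \<exists>\<mu>. \<mu> \<noteq> 0 \<and> equicont sc P (range (\<lambda>n. (\<lambda>x. sc \<mu> (B x)) ^^ n))}"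

text \<open>Resolvent set and spectrum in the extended plane C \<union> {\<infinity>}, where None represents \<infinity>.
  The operator B has domain D.\<close>
definition resolvent_set :: "(complex \<Rightarrow> 'a::ab_group_add \<Rightarrow> 'a) \<Rightarrow> (nat \<Rightarrow> 'a \<Rightarrow> real) \<Rightarrow> 'a set \<Rightarrow> ('a \<Rightarrow> 'a) \<Rightarrow> complex option set" where
  "resolvent_set sc P D B =
     Some ` {l. bij_betw (\<lambda>x. sc l x - B x) D UNIV
               \<and> inv_into D (\<lambda>x. sc l x - B x) \<in> L0 sc P}
     \<union> (if D = UNIV \<and> B \<in> L0 sc P then {None} else {})"

definition spectrum_ext :: "(complex \<Rightarrow> 'a::ab_group_add \<Rightarrow> 'a) \<Rightarrow> (nat \<Rightarrow> 'a \<Rightarrow> real) \<Rightarrow> 'a set \<Rightarrow> ('a \<Rightarrow> 'a) \<Rightarrow> complex option set" where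
  "spectrum_ext sc P D B = UNIV - resolvent_set sc P D B"

text \<open>Spectral bound (sup over the empty set is -\<infinity>).\<close>
definition spectral_bound :: "(complex \<Rightarrow> 'a::ab_group_add \<Rightarrow> 'a) \<Rightarrow> (nat \<Rightarrow> 'a \<Rightarrow> real) \<Rightarrow> 'a set \<Rightarrow> ('a \<Rightarrow> 'a) \<Rightarrow> ereal" where
  "spectral_bound sc P D B = Sup {ereal (Re l) | l. Some l \<in> spectrum_ext sc P D B}"

text \<open>Spectral radius of B \<in> L(X), with |\<infinity>| = +\<infinity>.\<close>
definition spectral_radius :: "(complex \<Rightarrow> 'a::ab_group_add \<Rightarrow> 'a) \<Rightarrow> (nat \<Rightarrow> 'a \<Rightarrow> real) \<Rightarrow> ('a \<Rightarrow> 'a) \<Rightarrow> ereal" where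
  "spectral_radius sc P B = Sup ((\<lambda>z. case z of None \<Rightarrow> \<infinity> | Some l \<Rightarrow> ereal (cmod l)) ` spectrum_ext sc P UNIV B)"

text \<open>Extended logarithm: log \<infinity> = \<infinity>, log r = -\<infinity> for r \<le> 0.\<close>
definition elog :: "ereal \<Rightarrow> ereal" where
  "elog r = (if r = \<infinity> then \<infinity> else if r \<le> 0 then - \<infinity> else ereal (ln (real_of_ereal r)))"

end

theory Submission
  imports Defs "HOL-Complex_Analysis.Complex_Analysis"
begin

text \<open>Since the powers of \<open>A\<close> are equicontinuous, every power series \<open>f\<close> with absolutely
  summable coefficients defines \<open>f(A) = \<Sum>\<^sub>k f\<^sub>k A\<^sup>k\<close> in \<open>L(X)\<^sub>0\<close>, and \<open>f \<mapsto> f(A)\<close> is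
  multiplicative. Differentiating \<open>s \<mapsto> T(s) e\<^bsup>(1-s)A\<^esub> x\<close> shows \<open>T(1) = e\<^sup>A\<close>.
  For the spectral mapping \<open>\<sigma>(e\<^sup>A) = exp \<sigma>(A)\<close> write \<open>e\<^sup>l - e\<^sup>X = (l - X) G\<^sub>l\<close> with \<open>G\<^sub>l\<close>
  entire: invertibility of \<open>e\<^sup>l - e\<^sup>A\<close> forces that of \<open>l - A\<close>, and conversely when
  \<open>|l| \<le> 1\<close>, because then \<open>G\<^sub>l\<close> has no zeros on the disc of radius \<open>\<pi>\<close> and \<open>1/G\<^sub>l\<close> has
  summable coefficients. If \<open>z\<close> has no logarithm of modulus \<open>\<le> 1\<close>, then \<open>z - e\<^sup>X\<close> has no
  zeros on a disc of radius \<open>> 1\<close> and \<open>z - e\<^sup>A\<close> is invertible outright. Hence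
  \<open>r(T(1)) = sup exp (Re \<sigma>(A)) = exp s(A)\<close>.\<close>

lemma funpow_comp_commute:
  assumes "g \<circ> h = h \<circ> g"
  shows "(g \<circ> h) ^^ n = g ^^ n \<circ> h ^^ n"
proof -
  have gh: "h (g x) = g (h x)" for x
    using assms by (metis comp_apply)
  have "h ((g ^^ k) x) = (g ^^ k) (h x)" for k x
    by (induction k) (simp_all add: gh)
  then show ?thesis
    by (induction n) (simp_all add: fun_eq_iff funpow_swap1)
qed

section \<open>Seminorms, convergence and equicontinuity\<close>

locale frechet_space =
  fixes sc :: "complex \<Rightarrow> 'a::ab_group_add \<Rightarrow> 'a" and P :: "nat \<Rightarrow> 'a \<Rightarrow> real"
  assumes frechet: "frechet sc P"
begin

sublocale V: vector_space sc
  using frechet unfolding frechet_def by auto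

lemma is_seminorm_P: "is_seminorm sc (P n)"
  using frechet unfolding frechet_def by auto

lemma P_scale: "P n (sc c x) = cmod c * P n x"
  using is_seminorm_P unfolding is_seminorm_def by auto

lemma P_triangle: "P n (x + y) \<le> P n x + P n y"
  using is_seminorm_P unfolding is_seminorm_def by auto

lemma P_zero [simp]: "P n 0 = 0"
  using P_scale[of n 0 0] by simp

lemma P_minus [simp]: "P n (- x) = P n x"
  using P_scale[of n "-1" x] by simp

lemma P_nonneg [simp]: "0 \<le> P n x"
  using P_triangle[of n x "- x"] by simp

lemma P_diff_commute: "P n (x - y) = P n (y - x)"
  by (metis P_minus minus_diff_eq)

lemma P_triangle_diff: "P n (x - z) \<le> P n (x - y) + P n (y - z)"
  using P_triangle[of n "x - y" "y - z"] by simp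

lemma P_reverse_triangle: "\<bar>P n x - P n y\<bar> \<le> P n (x - y)"
  using P_triangle[of n "x - y" y] P_triangle[of n "y - x" x] P_diff_commute[of n x y] by auto

lemma P_sum: "P n (sum f S) \<le> (\<Sum>i\<in>S. P n (f i))"
proof (induction S rule: infinite_finite_induct)
  case (insert x F)
  then show ?case using P_triangle[of n "f x" "sum f F"] by simp
qed auto

lemma P_separating: "(\<And>n. P n x \<le> 0) \<Longrightarrow> x = 0"
  using frechet P_nonneg unfolding frechet_def by (meson antisym)

abbreviation tends :: "('b \<Rightarrow> 'a) \<Rightarrow> 'a \<Rightarrow> 'b filter \<Rightarrow> bool" where
  "tends \<equiv> ftends sc P"

lemma tendsD: "tends f x F \<Longrightarrow> ((\<lambda>t. P n (f t - x)) \<longlongrightarrow> 0) F"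
  unfolding ftends_def by auto

lemma tends_by_bound:
  assumes "\<And>n. \<exists>b. (b \<longlongrightarrow> 0) F \<and> (\<forall>\<^sub>F t in F. P n (f t - x) \<le> b t)"
  shows "tends f x F"
  unfolding ftends_def
proof
  fix n
  obtain b where b: "(b \<longlongrightarrow> 0) F" "\<forall>\<^sub>F t in F. P n (f t - x) \<le> b t"
    using assms by blast
  show "((\<lambda>t. P n (f t - x)) \<longlongrightarrow> 0) F"
    by (rule tendsto_sandwich[OF _ b(2) tendsto_const b(1)]) simp
qed

lemma tends_iff_diff_tends_zero: "tends f x F \<longleftrightarrow> tends (\<lambda>t. f t - x) 0 F"
  unfolding ftends_def by simp

lemma cauchy_tends:
  assumes "\<And>n \<epsilon>. \<epsilon> > 0 \<Longrightarrow> \<exists>N. \<forall>i\<ge>N. \<forall>j\<ge>N. P n (u i - u j) < \<epsilon>"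
  shows "\<exists>x. tends u x sequentially"
  using frechet assms unfolding frechet_def ftends_def by blast

lemma tends_unique:
  assumes "F \<noteq> bot" "tends f x F" "tends f y F"
  shows "x = y"
proof -
  have "P n (x - y) \<le> 0" for n
  proof (rule tendsto_le[OF assms(1) _ tendsto_const])
    show "((\<lambda>t. P n (f t - x) + P n (f t - y)) \<longlongrightarrow> 0) F"
      using tendsto_add[OF tendsD[OF assms(2)] tendsD[OF assms(3)]] by simp
    show "\<forall>\<^sub>F t in F. P n (x - y) \<le> P n (f t - x) + P n (f t - y)"
    proof (intro always_eventually allI)
      fix t
      show "P n (x - y) \<le> P n (f t - x) + P n (f t - y)"
        using P_triangle_diff[of n x y "f t"] P_diff_commute[of n x "f t"] by simp
    qed
  qed
  then show ?thesis
    using P_separating[of "x - y"] by simp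
qed

lemma tends_const: "tends (\<lambda>t. x) x F"
  unfolding ftends_def by simp

lemma tends_add: "tends f x F \<Longrightarrow> tends g y F \<Longrightarrow> tends (\<lambda>t. f t + g t) (x + y) F"
proof (rule tends_by_bound)
  fix n
  assume f: "tends f x F" and g: "tends g y F"
  have lim: "((\<lambda>t. P n (f t - x) + P n (g t - y)) \<longlongrightarrow> 0) F"
    using tendsto_add[OF tendsD[OF f] tendsD[OF g]] by simp
  have "P n (f t + g t - (x + y)) \<le> P n (f t - x) + P n (g t - y)" for t
    using P_triangle[of n "f t - x" "g t - y"] by (simp add: algebra_simps)
  then have "\<forall>\<^sub>F t in F. P n (f t + g t - (x + y)) \<le> P n (f t - x) + P n (g t - y)"
    by (rule always_eventually[OF allI])
  with lim show "\<exists>b. (b \<longlongrightarrow> 0) F \<and> (\<forall>\<^sub>F t in F. P n (f t + g t - (x + y)) \<le> b t)"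
    by blast
qed

lemma tends_minus: "tends f x F \<Longrightarrow> tends (\<lambda>t. - f t) (- x) F"
  unfolding ftends_def by (simp add: minus_diff_minus P_diff_commute[of _ x])

lemma tends_diff: "tends f x F \<Longrightarrow> tends g y F \<Longrightarrow> tends (\<lambda>t. f t - g t) (x - y) F"
  using tends_add[OF _ tends_minus, of f x F g y] by simp

lemma tends_scale: "tends f x F \<Longrightarrow> tends (\<lambda>t. sc c (f t)) (sc c x) F"
  unfolding ftends_def
proof
  fix n
  assume "\<forall>n. ((\<lambda>t. P n (f t - x)) \<longlongrightarrow> 0) F"
  then have "((\<lambda>t. cmod c * P n (f t - x)) \<longlongrightarrow> 0) F"
    using tendsto_mult_right_zero by blast
  then show "((\<lambda>t. P n (sc c (f t) - sc c x)) \<longlongrightarrow> 0) F"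
    by (simp add: P_scale flip: V.scale_right_diff_distrib)
qed

lemma tends_cong: "\<forall>\<^sub>F t in F. f t = g t \<Longrightarrow> tends f x F \<Longrightarrow> tends g x F"
  unfolding ftends_def by (auto elim!: tendsto_cong[THEN iffD1, rotated] eventually_mono)

lemma tends_imp_tendsto_P:
  assumes "tends f x F"
  shows "((\<lambda>t. P n (f t)) \<longlongrightarrow> P n x) F"
proof -
  have "((\<lambda>t. P n (f t) - P n x) \<longlongrightarrow> 0) F"
    by (rule Lim_null_comparison[OF always_eventually tendsD[OF assms, of n]]) (simp add: P_reverse_triangle)
  then show ?thesis
    by (rule LIM_zero_cancel)
qed

definition equibounded :: "('a \<Rightarrow> 'a) set \<Rightarrow> bool" where
  "equibounded S \<longleftrightarrow> (\<forall>n. \<exists>m C. C \<ge> 0 \<and> (\<forall>B\<in>S. \<forall>x. P n (B x) \<le> C * P m x))"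

lemma equiboundedD: "equibounded S \<Longrightarrow> \<exists>m C. C \<ge> 0 \<and> (\<forall>B\<in>S. \<forall>x. P n (B x) \<le> C * P m x)"
  unfolding equibounded_def by blast

lemma cont_seminorm_P: "cont_seminorm sc P (P n)"
  unfolding cont_seminorm_def using is_seminorm_P by (intro conjI exI[of _ n] exI[of _ 1]) auto

lemma le_max_mult_P:
  assumes "\<forall>x. q x \<le> C * P m x"
  shows "q x \<le> max C 0 * P m x"
  using assms[rule_format, of x] P_nonneg[of m x] by (smt (verit) mult_right_mono)

lemma equicont_iff_equibounded: "equicont sc P S \<longleftrightarrow> equibounded S"
proof
  assume equi: "equicont sc P S"
  show "equibounded S" unfolding equibounded_def
  proof
    fix n
    obtain p C where p: "cont_seminorm sc P p" "C \<ge> 0" "\<forall>B\<in>S. \<forall>x. P n (B x) \<le> C * p x"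
      using equi cont_seminorm_P[of n] unfolding equicont_def by blast
    obtain m C' where pm: "\<forall>x. p x \<le> C' * P m x"
      using p(1) unfolding cont_seminorm_def by blast
    have "P n (B x) \<le> (C * max C' 0) * P m x" if "B \<in> S" for B x
    proof -
      have "P n (B x) \<le> C * p x" using p(3) that by blast
      also have "\<dots> \<le> C * (max C' 0 * P m x)"
        using le_max_mult_P[OF pm] p(2) by (rule mult_left_mono)
      finally show ?thesis by simp
    qed
    then show "\<exists>m C. C \<ge> 0 \<and> (\<forall>B\<in>S. \<forall>x. P n (B x) \<le> C * P m x)"
      using p(2) by (intro exI[of _ m] exI[of _ "C * max C' 0"]) auto
  qed
next
  assume bdd: "equibounded S"
  show "equicont sc P S" unfolding equicont_def
  proof (intro allI impI)
    fix q
    assume "cont_seminorm sc P q"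
    then obtain n C0 where n: "\<forall>x. q x \<le> C0 * P n x"
      unfolding cont_seminorm_def by blast
    obtain m C where m: "C \<ge> 0" "\<forall>B\<in>S. \<forall>x. P n (B x) \<le> C * P m x"
      using equiboundedD[OF bdd] by blast
    have "q (B x) \<le> (max C0 0 * C) * P m x" if "B \<in> S" for B x
    proof -
      have "q (B x) \<le> max C0 0 * P n (B x)" using le_max_mult_P[OF n] .
      also have "\<dots> \<le> max C0 0 * (C * P m x)" using m(2) that by (intro mult_left_mono) auto
      finally show ?thesis by simp
    qed
    then show "\<exists>p C. cont_seminorm sc P p \<and> 0 \<le> C \<and> (\<forall>B\<in>S. \<forall>x. q (B x) \<le> C * p x)"
      using m(1) cont_seminorm_P[of m] by (intro exI[of _ "P m"] exI[of _ "max C0 0 * C"]) auto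
  qed
qed

lemma equibounded_subset: "equibounded S \<Longrightarrow> S' \<subseteq> S \<Longrightarrow> equibounded S'"
  unfolding equibounded_def by (meson subsetD)

lemma equibounded_compositions:
  assumes "equibounded S1" "equibounded S2"
  shows "equibounded {B1 \<circ> B2 | B1 B2. B1 \<in> S1 \<and> B2 \<in> S2}"
  unfolding equibounded_def
proof
  fix n
  obtain m1 C1 where 1: "C1 \<ge> 0" "\<forall>B\<in>S1. \<forall>x. P n (B x) \<le> C1 * P m1 x"
    using equiboundedD[OF assms(1)] by blast
  obtain m2 C2 where 2: "C2 \<ge> 0" "\<forall>B\<in>S2. \<forall>x. P m1 (B x) \<le> C2 * P m2 x"
    using equiboundedD[OF assms(2)] by blast
  have "P n (B1 (B2 x)) \<le> (C1 * C2) * P m2 x" if "B1 \<in> S1" "B2 \<in> S2" for B1 B2 x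
  proof -
    have "P n (B1 (B2 x)) \<le> C1 * P m1 (B2 x)" using 1 that by blast
    also have "\<dots> \<le> C1 * (C2 * P m2 x)" using 1 2 that by (intro mult_left_mono) auto
    finally show ?thesis by simp
  qed
  then show "\<exists>m C. C \<ge> 0 \<and> (\<forall>B\<in>{B1 \<circ> B2 | B1 B2. B1 \<in> S1 \<and> B2 \<in> S2}. \<forall>x. P n (B x) \<le> C * P m x)"
    using 1 2 by (intro exI[of _ m2] exI[of _ "C1 * C2"]) auto
qed

lemma equibounded_scale:
  assumes "equibounded S"
  shows "equibounded {(\<lambda>x. sc c (B x)) | c B. cmod c \<le> M \<and> B \<in> S}"
  unfolding equibounded_def
proof
  fix n
  obtain m C where C: "C \<ge> 0" "\<forall>B\<in>S. \<forall>x. P n (B x) \<le> C * P m x"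
    using equiboundedD[OF assms] by blast
  have "P n (sc c (B x)) \<le> (max M 0 * C) * P m x" if "cmod c \<le> M" "B \<in> S" for c B x
  proof -
    have "P n (sc c (B x)) \<le> max M 0 * (C * P m x)"
      unfolding P_scale using that C by (intro mult_mono) auto
    then show ?thesis
      by (simp add: mult.assoc)
  qed
  then show "\<exists>m C. C \<ge> 0 \<and> (\<forall>B\<in>{(\<lambda>x. sc c (B x)) | c B. cmod c \<le> M \<and> B \<in> S}. \<forall>x. P n (B x) \<le> C * P m x)"
    using C(1) by (intro exI[of _ m] exI[of _ "max M 0 * C"]) auto
qed

lemma tends_zero_equibounded:
  assumes "equibounded S" "\<forall>\<^sub>F t in F. B t \<in> S" "tends f 0 F"
  shows "tends (\<lambda>t. B t (f t)) 0 F"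
proof (rule tends_by_bound)
  fix n
  obtain m C where C: "C \<ge> 0" "\<forall>B\<in>S. \<forall>x. P n (B x) \<le> C * P m x"
    using equiboundedD[OF assms(1)] by blast
  have "((\<lambda>t. C * P m (f t - 0)) \<longlongrightarrow> 0) F"
    using tendsto_mult_right_zero[OF tendsD[OF assms(3)]] .
  moreover have "\<forall>\<^sub>F t in F. P n (B t (f t) - 0) \<le> C * P m (f t - 0)"
    using assms(2) by eventually_elim (use C in auto)
  ultimately show "\<exists>b. (b \<longlongrightarrow> 0) F \<and> (\<forall>\<^sub>F t in F. P n (B t (f t) - 0) \<le> b t)"
    by blast
qed

abbreviation linop :: "('a \<Rightarrow> 'a) \<Rightarrow> bool" where
  "linop \<equiv> Vector_Spaces.linear sc sc"

lemma linop_iff: "linop B \<longleftrightarrow> (\<forall>x y. B (x + y) = B x + B y) \<and> (\<forall>c x. B (sc c x) = sc c (B x))"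
  unfolding Vector_Spaces.linear_iff using V.vector_space_axioms by auto

lemma linop_add: "linop B \<Longrightarrow> B (x + y) = B x + B y"
  using linop_iff by blast

lemma linop_scale: "linop B \<Longrightarrow> B (sc c x) = sc c (B x)"
  using linop_iff by blast

lemma linop_zero: "linop B \<Longrightarrow> B 0 = 0"
  using linop_scale[of B 0 0] by simp

lemma linop_minus: "linop B \<Longrightarrow> B (- x) = - B x"
  using linop_scale[of B "-1" x] by simp

lemma linop_diff: "linop B \<Longrightarrow> B (x - y) = B x - B y"
  using linop_add[of B x "- y"] linop_minus[of B y] by simp

lemma linop_sum: "linop B \<Longrightarrow> B (sum f S) = (\<Sum>i\<in>S. B (f i))"
  by (induction S rule: infinite_finite_induct) (auto simp: linop_add linop_zero)

lemma linop_comp: "linop B \<Longrightarrow> linop B' \<Longrightarrow> linop (B \<circ> B')"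
  unfolding linop_iff by auto

lemma linop_id: "linop id"
  unfolding linop_iff by simp

lemma linop_funpow: "linop B \<Longrightarrow> linop (B ^^ k)"
  by (induction k) (simp_all add: linop_id linop_comp)

lemma Lop_iff: "B \<in> Lop sc P \<longleftrightarrow> linop B \<and> equibounded {B}"
  unfolding Lop_def by (simp add: equicont_iff_equibounded)

lemma tends_Lop:
  assumes "B \<in> Lop sc P" "tends f x F"
  shows "tends (\<lambda>t. B (f t)) (B x) F"
proof -
  have B: "linop B" "equibounded {B}"
    using assms(1) by (simp_all add: Lop_iff)
  have "tends (\<lambda>t. f t - x) 0 F"
    using assms(2) tends_iff_diff_tends_zero by blast
  then have "tends (\<lambda>t. B (f t - x)) 0 F"
    using tends_zero_equibounded[where S="{B}" and B="\<lambda>_. B"] B(2) by simp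
  then show ?thesis
    unfolding tends_iff_diff_tends_zero[of _ "B x"] by (simp add: linop_diff[OF B(1)])
qed

lemma L0_iff: "B \<in> L0 sc P \<longleftrightarrow>
    linop B \<and> equibounded {B} \<and> (\<exists>\<mu>. \<mu> \<noteq> 0 \<and> equibounded (range (\<lambda>n. (\<lambda>x. sc \<mu> (B x)) ^^ n)))"
  unfolding L0_def Lop_iff equicont_iff_equibounded by blast

lemma L0_comp_commuting:
  assumes R: "R \<in> L0 sc P" and S: "S \<in> L0 sc P" and commute: "\<And>x. R (S x) = S (R x)"
  shows "(\<lambda>x. R (S x)) \<in> L0 sc P"
proof -
  obtain \<mu> \<nu> where \<mu>: "\<mu> \<noteq> 0" "equibounded (range (\<lambda>n. (\<lambda>x. sc \<mu> (R x)) ^^ n))"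
    and \<nu>: "\<nu> \<noteq> 0" "equibounded (range (\<lambda>n. (\<lambda>x. sc \<nu> (S x)) ^^ n))"
    and lin: "linop R" "linop S" and bdd: "equibounded {R}" "equibounded {S}"
    using R S unfolding L0_iff by blast
  define R' where "R' = (\<lambda>x. sc \<mu> (R x))"
  define S' where "S' = (\<lambda>x. sc \<nu> (S x))"
  have RS': "(\<lambda>x. sc (\<mu> * \<nu>) (R (S x))) = R' \<circ> S'"
    unfolding R'_def S'_def by (auto simp: linop_scale[OF lin(1)] mult.commute)
  have comm: "R' \<circ> S' = S' \<circ> R'"
    unfolding R'_def S'_def by (auto simp: linop_scale[OF lin(1)] linop_scale[OF lin(2)] commute mult.commute)
  have "range (\<lambda>n. (\<lambda>x. sc (\<mu> * \<nu>) (R (S x))) ^^ n)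
      \<subseteq> {B1 \<circ> B2 | B1 B2. B1 \<in> range (\<lambda>n. R' ^^ n) \<and> B2 \<in> range (\<lambda>n. S' ^^ n)}"
    unfolding RS' using funpow_comp_commute[OF comm] by blast
  then have "equibounded (range (\<lambda>n. (\<lambda>x. sc (\<mu> * \<nu>) (R (S x))) ^^ n))"
    using equibounded_compositions[OF \<mu>(2)[folded R'_def] \<nu>(2)[folded S'_def]] equibounded_subset by blast
  moreover have "linop (\<lambda>x. R (S x))"
    using linop_comp[OF lin] by (simp add: comp_def)
  moreover have "equibounded {\<lambda>x. R (S x)}"
    using equibounded_compositions[OF bdd] by (rule equibounded_subset) (auto simp: comp_def)
  moreover have "\<mu> * \<nu> \<noteq> 0"
    using \<mu>(1) \<nu>(1) by simp
  ultimately show ?thesis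
    unfolding L0_iff by blast
qed

lemma Some_in_resolvent_set_UNIV_iff:
  "Some l \<in> resolvent_set sc P UNIV B \<longleftrightarrow>
    (\<exists>R\<in>L0 sc P. (\<forall>x. sc l (R x) - B (R x) = x) \<and> (\<forall>x. R (sc l x - B x) = x))"
proof
  assume "Some l \<in> resolvent_set sc P UNIV B"
  then have bij: "bij_betw (\<lambda>x. sc l x - B x) UNIV UNIV"
    and L0: "inv_into UNIV (\<lambda>x. sc l x - B x) \<in> L0 sc P"
    unfolding resolvent_set_def by (auto split: if_splits)
  show "\<exists>R\<in>L0 sc P. (\<forall>x. sc l (R x) - B (R x) = x) \<and> (\<forall>x. R (sc l x - B x) = x)"
    using L0 bij_betw_inv_into_right[OF bij] bij_betw_inv_into_left[OF bij] by blast
next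
  assume "\<exists>R\<in>L0 sc P. (\<forall>x. sc l (R x) - B (R x) = x) \<and> (\<forall>x. R (sc l x - B x) = x)"
  then obtain R where R: "R \<in> L0 sc P" "\<And>x. sc l (R x) - B (R x) = x" "\<And>x. R (sc l x - B x) = x"
    by blast
  have bij: "bij_betw (\<lambda>x. sc l x - B x) UNIV UNIV"
    by (rule bij_betw_byWitness[where f'=R]) (use R in auto)
  have "inv_into UNIV (\<lambda>x. sc l x - B x) = R"
  proof
    fix y
    show "inv_into UNIV (\<lambda>x. sc l x - B x) y = R y"
      by (rule inv_into_f_eq) (use bij R in \<open>auto simp: bij_betw_def\<close>)
  qed
  then show "Some l \<in> resolvent_set sc P UNIV B"
    using bij R(1) unfolding resolvent_set_def by auto
qed

lemma None_in_resolvent_set_UNIV: "B \<in> L0 sc P \<Longrightarrow> None \<in> resolvent_set sc P UNIV B"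
  unfolding resolvent_set_def by auto

end

section \<open>Power series with absolutely summable coefficients\<close>

definition l1_fps :: "complex fps \<Rightarrow> bool" where
  "l1_fps f \<longleftrightarrow> summable (\<lambda>k. cmod (fps_nth f k))"

definition l1_norm :: "complex fps \<Rightarrow> real" where
  "l1_norm f = (\<Sum>k. cmod (fps_nth f k))"

lemma l1_norm_nonneg: "l1_fps f \<Longrightarrow> 0 \<le> l1_norm f"
  unfolding l1_fps_def l1_norm_def by (auto intro: suminf_nonneg)

lemma l1_fps_add: "l1_fps f \<Longrightarrow> l1_fps g \<Longrightarrow> l1_fps (f + g)"
  unfolding l1_fps_def
  by (rule summable_comparison_test[of _ "\<lambda>k. cmod (fps_nth f k) + cmod (fps_nth g k)"])
    (auto intro!: summable_add norm_triangle_ineq)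

lemma l1_fps_uminus: "l1_fps f \<Longrightarrow> l1_fps (- f)"
  unfolding l1_fps_def by simp

lemma l1_fps_diff: "l1_fps f \<Longrightarrow> l1_fps g \<Longrightarrow> l1_fps (f - g)"
  using l1_fps_add[of f "- g"] l1_fps_uminus[of g] by simp

lemma l1_fps_cmult: "l1_fps f \<Longrightarrow> l1_fps (fps_const c * f)"
  unfolding l1_fps_def by (simp add: norm_mult summable_mult)

lemma l1_norm_cmult: "l1_fps f \<Longrightarrow> l1_norm (fps_const c * f) = cmod c * l1_norm f"
  unfolding l1_norm_def l1_fps_def by (simp add: norm_mult suminf_mult)

lemma l1_fps_1: "l1_fps 1"
  unfolding l1_fps_def by (rule summable_comparison_test[of _ "\<lambda>k. if k = 0 then 1 else 0"]) auto

lemma l1_norm_1: "l1_norm 1 = 1"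
proof -
  have "(\<lambda>k. cmod (fps_nth (1 :: complex fps) k)) = (\<lambda>k. if k = 0 then 1 else 0)"
    by auto
  then show ?thesis
    unfolding l1_norm_def using sums_single[of 0 "\<lambda>_. 1::real"] by (simp add: sums_iff)
qed

lemma l1_fps_const: "l1_fps (fps_const c)"
  using l1_fps_cmult[OF l1_fps_1, of c] by simp

lemma l1_fps_X_mult: "l1_fps f \<Longrightarrow> l1_fps (fps_X * f)"
  unfolding l1_fps_def
proof -
  assume "summable (\<lambda>k. cmod (fps_nth f k))"
  then have "summable (\<lambda>k. cmod (fps_nth f (k - 1)))"
    using summable_iff_shift[of "\<lambda>k. cmod (fps_nth f (k - 1))" 1] by simp
  then show "summable (\<lambda>k. cmod (fps_nth (fps_X * f) k))"
    by (rule summable_comparison_test[rotated]) auto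
qed

lemma l1_fps_X: "l1_fps fps_X"
  using l1_fps_X_mult[OF l1_fps_1] by simp

lemma l1_fps_X_power_mult: "l1_fps f \<Longrightarrow> l1_fps (fps_X ^ n * f)"
  by (induction n) (auto simp: mult.assoc l1_fps_X_mult)

lemma l1_fps_mult_l1_norm_le:
  assumes f: "l1_fps f" and g: "l1_fps g"
  shows "l1_fps (f * g)" and "l1_norm (f * g) \<le> l1_norm f * l1_norm g"
proof -
  define a where "a k = cmod (fps_nth f k)" for k
  define b where "b k = cmod (fps_nth g k)" for k
  have sa: "summable (\<lambda>k. norm (a k))" and sb: "summable (\<lambda>k. norm (b k))"
    using f g unfolding l1_fps_def a_def b_def by auto
  have le: "cmod (fps_nth (f * g) k) \<le> (\<Sum>i\<le>k. a i * b (k - i))" for k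
  proof -
    have "cmod (fps_nth (f * g) k) = cmod (\<Sum>i\<le>k. fps_nth f i * fps_nth g (k - i))"
      by (simp add: fps_mult_nth atLeast0AtMost)
    also have "\<dots> \<le> (\<Sum>i\<le>k. cmod (fps_nth f i * fps_nth g (k - i)))"
      by (rule norm_sum)
    finally show ?thesis
      by (simp add: a_def b_def norm_mult)
  qed
  have cauchy: "summable (\<lambda>k. \<Sum>i\<le>k. a i * b (k - i))"
    by (rule summable_Cauchy_product[OF sa sb])
  show fg: "l1_fps (f * g)"
    unfolding l1_fps_def by (rule summable_comparison_test[OF _ cauchy]) (use le in auto)
  have "l1_norm (f * g) \<le> (\<Sum>k. \<Sum>i\<le>k. a i * b (k - i))"
    unfolding l1_norm_def using fg le cauchy unfolding l1_fps_def by (intro suminf_le) auto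
  also have "\<dots> = (\<Sum>k. a k) * (\<Sum>k. b k)"
    by (rule Cauchy_product[OF sa sb, symmetric])
  finally show "l1_norm (f * g) \<le> l1_norm f * l1_norm g"
    unfolding l1_norm_def a_def b_def .
qed

lemma l1_fps_power_l1_norm_le:
  assumes "l1_fps f"
  shows "l1_fps (f ^ n)" and "l1_norm (f ^ n) \<le> l1_norm f ^ n"
proof (induction n)
  case (Suc n)
  case 1 show ?case
    using l1_fps_mult_l1_norm_le(1)[OF assms Suc.IH(1)] by simp
  case 2 show ?case
    using l1_fps_mult_l1_norm_le(2)[OF assms Suc.IH(1)] Suc.IH(2) l1_norm_nonneg[OF assms]
    by (simp add: order_trans[OF _ mult_left_mono])
qed (simp_all add: l1_fps_1 l1_norm_1)

lemma l1_fps_cutoff: "l1_fps (fps_cutoff N f)"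
  unfolding l1_fps_def
  by (rule summable_comparison_test[of _ "\<lambda>k. if k < N then cmod (fps_nth f k) else 0"])
    (auto intro: summable_If_finite[of "\<lambda>k. k < N", simplified])

lemma l1_norm_diff_cutoff:
  assumes "l1_fps f"
  shows "l1_norm (f - fps_cutoff N f) = l1_norm f - (\<Sum>k<N. cmod (fps_nth f k))"
proof -
  have "summable (\<lambda>k. cmod (fps_nth (f - fps_cutoff N f) k))"
    using l1_fps_diff[OF assms l1_fps_cutoff] unfolding l1_fps_def .
  then have "l1_norm (f - fps_cutoff N f) = (\<Sum>k. cmod (fps_nth (f - fps_cutoff N f) (k + N)))"
    unfolding l1_norm_def by (subst suminf_split_initial_segment[of _ N]) simp_all
  also have "\<dots> = (\<Sum>k. cmod (fps_nth f (k + N)))"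
    by simp
  also have "\<dots> = l1_norm f - (\<Sum>k<N. cmod (fps_nth f k))"
    using assms unfolding l1_fps_def l1_norm_def by (rule suminf_minus_initial_segment)
  finally show ?thesis .
qed

lemma l1_norm_diff_cutoff_tendsto_0:
  assumes "l1_fps f"
  shows "(\<lambda>N. l1_norm (f - fps_cutoff N f)) \<longlonglongrightarrow> 0"
proof -
  have "(\<lambda>N. l1_norm f - (\<Sum>k<N. cmod (fps_nth f k))) \<longlonglongrightarrow> l1_norm f - l1_norm f"
    using assms unfolding l1_fps_def l1_norm_def by (intro tendsto_diff tendsto_const summable_LIMSEQ)
  then show ?thesis
    using l1_norm_diff_cutoff[OF assms] by simp
qed

lemma l1_fps_if_conv_radius_gt_1: "fps_conv_radius f > 1 \<Longrightarrow> l1_fps f"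
  using norm_summable_fps[of 1 f] unfolding l1_fps_def by (simp add: one_ereal_def)

lemma l1_norm_fps_exp: "l1_norm (fps_exp c) = exp (cmod c)"
  and l1_fps_exp: "l1_fps (fps_exp c)"
proof -
  have "(\<lambda>k. cmod (fps_nth (fps_exp c) k)) = (\<lambda>k. cmod c ^ k / fact k)"
    by (simp add: norm_divide norm_power)
  moreover have "(\<lambda>k. cmod c ^ k / fact k) sums exp (cmod c)"
    using exp_converges[of "cmod c"] by (simp add: divide_inverse mult.commute)
  ultimately have "(\<lambda>k. cmod (fps_nth (fps_exp c) k)) sums exp (cmod c)"
    by simp
  then show "l1_norm (fps_exp c) = exp (cmod c)" "l1_fps (fps_exp c)"
    unfolding l1_norm_def l1_fps_def by (simp_all add: sums_iff)
qed

lemma fps_cutoff_fps_exp_1: "fps_cutoff 1 (fps_exp (c :: complex)) = 1"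
  by (auto simp: fps_eq_iff)

lemma fps_cutoff_fps_exp_2: "fps_cutoff 2 (fps_exp (c :: complex)) = 1 + fps_const c * fps_X"
  by (auto simp: fps_eq_iff numeral_2_eq_2 less_Suc_eq)

lemma l1_norm_fps_exp_minus_1: "l1_norm (fps_exp c - 1) = exp (cmod c) - 1"
  using l1_norm_diff_cutoff[OF l1_fps_exp, of c 1]
  unfolding fps_cutoff_fps_exp_1 by (simp add: l1_norm_fps_exp)

lemma l1_norm_fps_exp_minus_linear:
  "l1_norm (fps_exp c - 1 - fps_const c * fps_X) = exp (cmod c) - 1 - cmod c"
  using l1_norm_diff_cutoff[OF l1_fps_exp, of c 2]
  unfolding fps_cutoff_fps_exp_2 by (simp add: l1_norm_fps_exp numeral_2_eq_2 diff_diff_eq)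

lemma fps_exp_difference_quotient_eq:
  fixes u h :: complex
  assumes "h \<noteq> 0"
  shows "fps_exp u * (fps_const (1 / h) * (fps_exp (- h) - 1 - fps_const (- h) * fps_X))
    = fps_const (1 / h) * (fps_exp (u - h) - fps_exp u) + fps_X * fps_exp u"
proof -
  have "fps_exp (u - h) = fps_exp u * fps_exp (- h)"
    using fps_exp_add_mult[of u "- h"] by simp
  moreover have "fps_const (1 / h) * fps_const (- h) = - 1"
    using assms by (simp flip: fps_const_mult)
  ultimately show ?thesis
    by algebra
qed

lemma exp_minus_linear_quotient_tendsto_0: "((\<lambda>h. (exp h - 1 - h) / h :: real) \<longlongrightarrow> 0) (at_right 0)"
proof -
  have "((\<lambda>h. (exp h - exp 0) / (h - 0)) \<longlongrightarrow> (1 :: real)) (at 0)"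
    using DERIV_exp[of 0] unfolding has_field_derivative_iff by simp
  then have "((\<lambda>h. (exp h - 1) / h - 1) \<longlongrightarrow> (0 :: real)) (at 0)"
    using tendsto_diff[OF _ tendsto_const, of _ 1 _ 1] by simp
  then have lim: "((\<lambda>h. (exp h - 1) / h - 1) \<longlongrightarrow> (0 :: real)) (at_right 0)"
    by (rule tendsto_mono[OF at_le, rotated]) simp
  have "\<forall>\<^sub>F h in at_right 0. (exp h - 1) / h - 1 = (exp h - 1 - h) / (h :: real)"
    using eventually_at_right_less[of 0] by eventually_elim (simp add: field_simps)
  from Lim_transform_eventually[OF lim this] show ?thesis .
qed

lemma l1_norm_fps_exp_diff_tendsto_0:
  assumes "(g \<longlongrightarrow> u) F"
  shows "((\<lambda>t. l1_norm (fps_exp (of_real (g t)) - fps_exp (of_real u :: complex))) \<longlongrightarrow> 0) F"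
proof -
  let ?d = "\<lambda>t. fps_exp (of_real (g t)) - fps_exp (of_real u :: complex)"
  have bound: "l1_norm (?d t) \<le> exp \<bar>u\<bar> * (exp \<bar>g t - u\<bar> - 1)" for t
  proof -
    have "?d t = fps_exp (of_real u) * (fps_exp (of_real (g t - u)) - 1)"
      by (simp add: right_diff_distrib flip: fps_exp_add_mult)
    also have "l1_norm \<dots> \<le> l1_norm (fps_exp (of_real u)) * l1_norm (fps_exp (of_real (g t - u)) - 1)"
      by (rule l1_fps_mult_l1_norm_le(2)[OF l1_fps_exp l1_fps_diff[OF l1_fps_exp l1_fps_1]])
    finally show ?thesis
      by (simp only: l1_norm_fps_exp l1_norm_fps_exp_minus_1 norm_of_real)
  qed
  have "((\<lambda>t. exp \<bar>g t - u\<bar> - 1) \<longlongrightarrow> exp \<bar>u - u\<bar> - 1) F"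
    by (intro tendsto_diff tendsto_exp tendsto_rabs assms tendsto_const)
  then have lim: "((\<lambda>t. exp \<bar>u\<bar> * (exp \<bar>g t - u\<bar> - 1)) \<longlongrightarrow> 0) F"
    by (simp add: tendsto_mult_right_zero)
  show ?thesis
    by (rule tendsto_sandwich[OF always_eventually always_eventually tendsto_const lim])
      (use bound in \<open>simp_all add: l1_norm_nonneg l1_fps_diff l1_fps_exp\<close>)
qed

lemma l1_norm_fps_exp_difference_quotient_tendsto_0:
  "((\<lambda>h. l1_norm (fps_const (1 / of_real h) * (fps_exp (of_real (u - h)) - fps_exp (of_real u))
      + fps_X * fps_exp (of_real u :: complex))) \<longlongrightarrow> 0) (at_right 0)"
proof -
  let ?q = "\<lambda>h. fps_const (1 / of_real h) * (fps_exp (of_real (u - h)) - fps_exp (of_real u))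
      + fps_X * fps_exp (of_real u :: complex)"
  let ?r = "\<lambda>h. fps_exp (- of_real h :: complex) - 1 - fps_const (- of_real h) * fps_X"
  have r: "l1_fps (?r h)" for h
    by (intro l1_fps_diff l1_fps_exp l1_fps_1 l1_fps_cmult l1_fps_X)
  have "l1_norm (?q h) \<le> exp \<bar>u\<bar> * ((exp h - 1 - h) / h)" if "h > 0" for h
  proof -
    have "?q h = fps_exp (of_real u) * (fps_const (1 / of_real h) * ?r h)"
      using fps_exp_difference_quotient_eq[of "of_real h" "of_real u"] that by simp
    also have "l1_norm \<dots> \<le> l1_norm (fps_exp (of_real u)) * l1_norm (fps_const (1 / of_real h) * ?r h)"
      by (rule l1_fps_mult_l1_norm_le(2)[OF l1_fps_exp l1_fps_cmult[OF r]])
    also have "\<dots> = exp \<bar>u\<bar> * (1 / \<bar>h\<bar> * (exp \<bar>h\<bar> - 1 - \<bar>h\<bar>))"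
      by (simp only: l1_norm_fps_exp l1_norm_cmult[OF r] l1_norm_fps_exp_minus_linear
          norm_minus_cancel norm_divide norm_one norm_of_real)
    finally show ?thesis
      using that by simp
  qed
  then have bound: "\<forall>\<^sub>F h in at_right 0. l1_norm (?q h) \<le> exp \<bar>u\<bar> * ((exp h - 1 - h) / h)"
    by (rule eventually_mono[OF eventually_at_right_less])
  have lim: "((\<lambda>h. exp \<bar>u\<bar> * ((exp h - 1 - h) / h)) \<longlongrightarrow> 0) (at_right 0)"
    by (rule tendsto_mult_right_zero[OF exp_minus_linear_quotient_tendsto_0])
  show ?thesis
    by (rule tendsto_sandwich[OF always_eventually bound tendsto_const lim])
      (simp add: l1_norm_nonneg l1_fps_add l1_fps_cmult l1_fps_diff l1_fps_exp l1_fps_X_mult)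
qed

section \<open>Dividing \<open>e\<^sup>l - e\<^sup>z\<close> by \<open>l - z\<close>\<close>

definition exp_quotient :: "complex \<Rightarrow> complex \<Rightarrow> complex" where
  "exp_quotient l z = (if z = l then exp l else (exp z - exp l) / (z - l))"

lemma exp_quotient_holomorphic: "exp_quotient l holomorphic_on UNIV"
proof -
  have "deriv exp l = exp l"
    by (rule DERIV_imp_deriv) (rule DERIV_exp)
  then have "exp_quotient l = (\<lambda>z. if z = l then deriv exp l else (exp z - exp l) / (z - l))"
    unfolding exp_quotient_def by auto
  then show ?thesis
    by (simp add: pole_lemma_open holomorphic_on_exp)
qed

definition exp_quotient_fps :: "complex \<Rightarrow> complex fps" where
  "exp_quotient_fps l = fps_expansion (exp_quotient l) 0"

lemma fps_conv_radius_exp_quotient_fps: "fps_conv_radius (exp_quotient_fps l) = \<infinity>"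
  using conv_radius_fps_expansion[of "exp_quotient l" 0 \<infinity>] exp_quotient_holomorphic[of l]
  unfolding exp_quotient_fps_def by simp

lemma eval_exp_quotient_fps: "eval_fps (exp_quotient_fps l) z = exp_quotient l z"
  using eval_fps_expansion'[of "exp_quotient l" 0 \<infinity> z] exp_quotient_holomorphic[of l]
  unfolding exp_quotient_fps_def by simp

lemma l1_fps_exp_quotient_fps: "l1_fps (exp_quotient_fps l)"
  by (rule l1_fps_if_conv_radius_gt_1) (simp add: fps_conv_radius_exp_quotient_fps)

lemma exp_quotient_fps_factorization:
  "(fps_const l - fps_X) * exp_quotient_fps l = fps_const (exp l) - fps_exp 1"
proof (rule eval_fps_eqD)
  have radius: "fps_conv_radius (fps_const l - fps_X :: complex fps) = \<infinity>"
    using fps_conv_radius_diff[of "fps_const l" "fps_X :: complex fps"] by simp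
  show "fps_conv_radius ((fps_const l - fps_X) * exp_quotient_fps l) > 0"
    using fps_conv_radius_mult[of "fps_const l - fps_X" "exp_quotient_fps l"] radius
      fps_conv_radius_exp_quotient_fps by simp
  show "fps_conv_radius (fps_const (exp l) - fps_exp 1 :: complex fps) > 0"
    using fps_conv_radius_diff[of "fps_const (exp l)" "fps_exp (1::complex)"] by simp
  have "eval_fps ((fps_const l - fps_X) * exp_quotient_fps l) z = eval_fps (fps_const (exp l) - fps_exp 1) z"
    for z
  proof -
    have "eval_fps ((fps_const l - fps_X) * exp_quotient_fps l) z = (l - z) * exp_quotient l z"
      using radius fps_conv_radius_exp_quotient_fps
      by (simp add: eval_fps_mult eval_fps_diff eval_exp_quotient_fps)
    also have "\<dots> = exp l - exp z"
      by (cases "z = l") (auto simp: exp_quotient_def field_simps)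
    finally show ?thesis
      by (simp add: eval_fps_diff)
  qed
  then show "\<forall>\<^sub>F z in nhds 0. eval_fps ((fps_const l - fps_X) * exp_quotient_fps l) z
                              = eval_fps (fps_const (exp l) - fps_exp 1) z"
    by simp
qed

lemma exp_quotient_nonzero:
  assumes "norm l < pi" "norm z < pi"
  shows "exp_quotient l z \<noteq> 0"
proof (cases "z = l")
  case False
  have "z \<in> ball 0 pi" "l \<in> ball 0 pi"
    using assms by auto
  then have "exp z \<noteq> exp l"
    using inj_on_exp_pi[of 0] False by (auto dest: inj_onD)
  then show ?thesis
    using False by (simp add: exp_quotient_def)
qed (simp add: exp_quotient_def)

lemma l1_fps_inverse:
  fixes g :: "complex fps" and \<rho> :: real
  assumes "\<rho> > 1" "fps_conv_radius g > 1" "\<And>z. norm z < \<rho> \<Longrightarrow> eval_fps g z \<noteq> 0"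
  shows "l1_fps (inverse g)" and "g * inverse g = 1"
proof -
  have "fps_conv_radius (inverse g) \<ge> min (ereal \<rho>) (fps_conv_radius g)"
    by (rule fps_conv_radius_inverse) (use assms(3) in auto)
  moreover have "min (ereal \<rho>) (fps_conv_radius g) > 1"
    using assms(1,2) by simp
  ultimately show "l1_fps (inverse g)"
    by (intro l1_fps_if_conv_radius_gt_1) (meson less_le_trans)
  have "fps_nth g 0 \<noteq> 0"
    using assms(3)[of 0] assms(1) by (simp add: eval_fps_at_0)
  then show "g * inverse g = 1"
    by (rule inverse_mult_eq_1')
qed

lemma exp_omits_disc_without_small_log:
  fixes z :: complex
  assumes "\<nexists>l. exp l = z \<and> norm l \<le> 1"
  obtains \<rho> where "\<rho> > 1" "\<And>w. norm w < \<rho> \<Longrightarrow> exp w \<noteq> z"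
proof (cases "\<exists>\<mu>. exp \<mu> = z \<and> norm \<mu> < pi")
  case True
  then obtain \<mu> where \<mu>: "exp \<mu> = z" "norm \<mu> < pi"
    by blast
  have "exp w \<noteq> z" if "norm w < norm \<mu>" for w
  proof
    assume "exp w = z"
    moreover have "w \<in> ball 0 pi" "\<mu> \<in> ball 0 pi"
      using \<mu>(2) that by auto
    ultimately have "w = \<mu>"
      using inj_on_exp_pi[of 0] \<mu>(1) by (auto dest: inj_onD)
    then show False
      using that by simp
  qed
  moreover have "norm \<mu> > 1"
    using assms \<mu>(1) by force
  ultimately show ?thesis
    using that by blast
next
  case False
  then show ?thesis
    using that[of pi] pi_gt3 by force
qed

section \<open>The extended logarithm of a supremum\<close>

lemma SUP_ereal_exp_eq_top:
  fixes f :: "'b \<Rightarrow> real"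
  assumes "(SUP x\<in>S. ereal (f x)) = \<infinity>"
  shows "(SUP x\<in>S. ereal (exp (f x))) = \<infinity>"
  unfolding top_ereal_def[symmetric] Sup_eq_top_iff
proof (intro allI impI)
  fix y :: ereal
  assume "y < top"
  then obtain M :: real where M: "y \<le> ereal M"
    by (cases y) auto
  have "ereal M < (SUP x\<in>S. ereal (f x))"
    using assms by simp
  then obtain x where x: "x \<in> S" "M < f x"
    unfolding less_Sup_iff by auto
  then have "y < ereal (exp (f x))"
    using M exp_gt_self[of "f x"] by (simp add: le_less_trans)
  then show "\<exists>i\<in>(\<lambda>x. ereal (exp (f x))) ` S. y < i"
    using x(1) by blast
qed

lemma SUP_ereal_exp_eq:
  fixes f :: "'b \<Rightarrow> real"
  assumes "(SUP x\<in>S. ereal (f x)) = ereal r"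
  shows "(SUP x\<in>S. ereal (exp (f x))) = ereal (exp r)"
proof (rule antisym)
  have le_r: "f x \<le> r" if "x \<in> S" for x
    using SUP_upper[OF that, of "\<lambda>x. ereal (f x)"] assms by simp
  then show "(SUP x\<in>S. ereal (exp (f x))) \<le> ereal (exp r)"
    by (auto intro!: SUP_least)
  show "ereal (exp r) \<le> (SUP x\<in>S. ereal (exp (f x)))"
  proof (rule dense_le)
    fix y
    assume "y < ereal (exp r)"
    then obtain u where u: "y < ereal u" "u < exp r"
      using ereal_dense2 by fastforce
    have "ereal u \<le> (SUP x\<in>S. ereal (exp (f x)))"
    proof (cases "u > 0")
      case True
      then have "ereal (ln u) < (SUP x\<in>S. ereal (f x))"
        using u(2) assms ln_less_cancel_iff[of u "exp r"] by simp
      then obtain x where x: "x \<in> S" "ln u < f x"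
        unfolding less_Sup_iff by auto
      then have "u \<le> exp (f x)"
        using True by (metis exp_ln exp_less_cancel_iff less_imp_le)
      then show ?thesis
        using x(1) by (auto intro: SUP_upper2)
    next
      case False
      obtain x where "x \<in> S"
        using assms by (cases "S = {}") (auto simp: bot_ereal_def)
      moreover have "u \<le> exp (f x)"
        using False exp_gt_zero[of "f x"] by linarith
      ultimately show ?thesis
        by (auto intro: SUP_upper2)
    qed
    with u(1) show "y \<le> (SUP x\<in>S. ereal (exp (f x)))"
      by simp
  qed
qed

lemma elog_Sup_exp:
  fixes f :: "'b \<Rightarrow> real"
  shows "elog (SUP x\<in>S. ereal (exp (f x))) = (SUP x\<in>S. ereal (f x))"
proof (cases "SUP x\<in>S. ereal (f x)")
  case (real r)
  then show ?thesis
    by (simp add: SUP_ereal_exp_eq elog_def)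
next
  case PInf
  then show ?thesis
    by (simp add: SUP_ereal_exp_eq_top elog_def)
next
  case MInf
  then have "S = {}"
    by (auto simp: Sup_eq_MInfty)
  then show ?thesis
    by (simp add: elog_def bot_ereal_def)
qed

section \<open>Functional calculus of a power-bounded operator\<close>

locale power_bounded = frechet_space +
  fixes A :: "'a \<Rightarrow> 'a"
  assumes linop_A: "linop A" and equibounded_powers: "equibounded (range (\<lambda>k. A ^^ k))"
begin

lemma A_Lop: "A \<in> Lop sc P"
proof -
  have "A \<in> range (\<lambda>k. A ^^ k)"
    by (rule range_eqI[of _ _ 1]) simp
  then show ?thesis
    using linop_A equibounded_subset[OF equibounded_powers, of "{A}"] by (simp add: Lop_iff)
qed

lemma linop_A_funpow: "linop (A ^^ k)"
  using linop_funpow[OF linop_A] .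

definition partial_calc :: "complex fps \<Rightarrow> nat \<Rightarrow> 'a \<Rightarrow> 'a" where
  "partial_calc f N x = (\<Sum>k<N. sc (fps_nth f k) ((A ^^ k) x))"

definition fcalc :: "complex fps \<Rightarrow> 'a \<Rightarrow> 'a" where
  "fcalc f x = (THE y. tends (\<lambda>N. partial_calc f N x) y sequentially)"

lemma P_sum_powers_le:
  "\<exists>m C. C \<ge> 0 \<and> (\<forall>f S x. P n (\<Sum>k\<in>S. sc (fps_nth f k) ((A ^^ k) x))
                              \<le> (\<Sum>k\<in>S. cmod (fps_nth f k)) * C * P m x)"
proof -
  obtain m C where C: "C \<ge> 0" "\<forall>B\<in>range (\<lambda>k. A ^^ k). \<forall>x. P n (B x) \<le> C * P m x"
    using equiboundedD[OF equibounded_powers] by blast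
  have "P n (\<Sum>k\<in>S. sc (fps_nth f k) ((A ^^ k) x)) \<le> (\<Sum>k\<in>S. cmod (fps_nth f k)) * C * P m x"
    for f S x
  proof -
    have "P n (\<Sum>k\<in>S. sc (fps_nth f k) ((A ^^ k) x)) \<le> (\<Sum>k\<in>S. P n (sc (fps_nth f k) ((A ^^ k) x)))"
      by (rule P_sum)
    also have "\<dots> \<le> (\<Sum>k\<in>S. cmod (fps_nth f k) * (C * P m x))"
      using C by (intro sum_mono) (auto simp: P_scale intro!: mult_left_mono)
    finally show ?thesis
      by (simp add: sum_distrib_right mult.assoc)
  qed
  then show ?thesis
    using C(1) by blast
qed

lemma partial_calc_diff:
  assumes "N \<le> M"
  shows "partial_calc f M x - partial_calc f N x = (\<Sum>k\<in>{N..<M}. sc (fps_nth f k) ((A ^^ k) x))"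
proof -
  have "partial_calc f N x + (\<Sum>k\<in>{N..<M}. sc (fps_nth f k) ((A ^^ k) x)) = partial_calc f M x"
    using sum.atLeastLessThan_concat[OF _ assms, of 0 "\<lambda>k. sc (fps_nth f k) ((A ^^ k) x)"]
    unfolding partial_calc_def by (simp add: atLeast0LessThan)
  then show ?thesis
    by (metis add_diff_cancel_left')
qed

lemma partial_calc_converges:
  assumes f: "l1_fps f"
  shows "\<exists>y. tends (\<lambda>N. partial_calc f N x) y sequentially"
proof (rule cauchy_tends)
  fix n and \<epsilon> :: real
  assume "\<epsilon> > 0"
  obtain m C where C: "C \<ge> 0" "\<forall>f S x. P n (\<Sum>k\<in>S. sc (fps_nth f k) ((A ^^ k) x))
                                      \<le> (\<Sum>k\<in>S. cmod (fps_nth f k)) * C * P m x"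
    using P_sum_powers_le by blast
  define D where "D = C * P m x + 1"
  have "D > 0"
    unfolding D_def using C(1) by (simp add: add_nonneg_pos)
  then obtain N where N: "\<forall>i\<ge>N. \<forall>j. norm (\<Sum>k\<in>{i..<j}. cmod (fps_nth f k)) < \<epsilon> / D"
    using f \<open>\<epsilon> > 0\<close> unfolding l1_fps_def summable_Cauchy by (meson divide_pos_pos)
  have close: "P n (partial_calc f i x - partial_calc f j x) < \<epsilon>" if "j \<le> i" "N \<le> j" for i j
  proof -
    have "P n (partial_calc f i x - partial_calc f j x) \<le> (\<Sum>k\<in>{j..<i}. cmod (fps_nth f k)) * C * P m x"
      using C(2) partial_calc_diff[OF that(1)] by simp
    also have "\<dots> \<le> (\<Sum>k\<in>{j..<i}. cmod (fps_nth f k)) * D"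
      unfolding D_def using C(1) by (simp add: mult.assoc sum_nonneg mult_left_mono)
    also have "\<dots> < \<epsilon>"
      using N[rule_format, OF that(2), of i] \<open>D > 0\<close> by (simp add: pos_less_divide_eq sum_nonneg)
    finally show ?thesis .
  qed
  show "\<exists>N. \<forall>i\<ge>N. \<forall>j\<ge>N. P n (partial_calc f i x - partial_calc f j x) < \<epsilon>"
    using close P_diff_commute[of n "partial_calc f _ x"] by (metis nle_le)
qed

lemma fcalc_tends: "l1_fps f \<Longrightarrow> tends (\<lambda>N. partial_calc f N x) (fcalc f x) sequentially"
  unfolding fcalc_def using partial_calc_converges tends_unique
  by (metis (mono_tags, lifting) theI trivial_limit_sequentially)

lemma fcalc_eqI: "l1_fps f \<Longrightarrow> tends (\<lambda>N. partial_calc f N x) y sequentially \<Longrightarrow> fcalc f x = y"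
  using fcalc_tends tends_unique trivial_limit_sequentially by blast

lemma P_fcalc_le: "\<exists>m C. C \<ge> 0 \<and> (\<forall>f x. l1_fps f \<longrightarrow> P n (fcalc f x) \<le> l1_norm f * C * P m x)"
proof -
  obtain m C where C: "C \<ge> 0" "\<forall>f S x. P n (\<Sum>k\<in>S. sc (fps_nth f k) ((A ^^ k) x))
                                      \<le> (\<Sum>k\<in>S. cmod (fps_nth f k)) * C * P m x"
    using P_sum_powers_le by blast
  have "P n (fcalc f x) \<le> l1_norm f * C * P m x" if f: "l1_fps f" for f x
  proof (rule tendsto_le[OF trivial_limit_sequentially tendsto_const])
    show "(\<lambda>N. P n (partial_calc f N x)) \<longlonglongrightarrow> P n (fcalc f x)"
      by (rule tends_imp_tendsto_P[OF fcalc_tends[OF f]])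
    have "P n (partial_calc f N x) \<le> l1_norm f * C * P m x" for N
    proof -
      have "P n (partial_calc f N x) \<le> (\<Sum>k<N. cmod (fps_nth f k)) * C * P m x"
        unfolding partial_calc_def using C(2) by blast
      also have "\<dots> \<le> l1_norm f * C * P m x"
        using f C(1) unfolding l1_fps_def l1_norm_def
        by (intro mult_right_mono sum_le_suminf) auto
      finally show ?thesis .
    qed
    then show "\<forall>\<^sub>F N in sequentially. P n (partial_calc f N x) \<le> l1_norm f * C * P m x"
      by simp
  qed
  then show ?thesis
    using C(1) by blast
qed

lemma partial_calc_add_right: "partial_calc f N (x + y) = partial_calc f N x + partial_calc f N y"
  unfolding partial_calc_def by (simp add: linop_add[OF linop_A_funpow] V.scale_right_distrib sum.distrib)

lemma partial_calc_scale_right: "partial_calc f N (sc c x) = sc c (partial_calc f N x)"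
  unfolding partial_calc_def V.scale_sum_right
  by (intro sum.cong refl) (simp add: linop_scale[OF linop_A_funpow] mult.commute)

lemma partial_calc_add: "partial_calc (f + g) N x = partial_calc f N x + partial_calc g N x"
  unfolding partial_calc_def by (simp add: V.scale_left_distrib sum.distrib)

lemma partial_calc_cmult: "partial_calc (fps_const c * f) N x = sc c (partial_calc f N x)"
  unfolding partial_calc_def V.scale_sum_right by simp

lemma fcalc_add_right: "l1_fps f \<Longrightarrow> fcalc f (x + y) = fcalc f x + fcalc f y"
  by (rule fcalc_eqI) (simp_all add: partial_calc_add_right tends_add fcalc_tends)

lemma fcalc_scale_right: "l1_fps f \<Longrightarrow> fcalc f (sc c x) = sc c (fcalc f x)"
  by (rule fcalc_eqI) (simp_all add: partial_calc_scale_right tends_scale fcalc_tends)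

lemma fcalc_Lop: "l1_fps f \<Longrightarrow> fcalc f \<in> Lop sc P"
  unfolding Lop_iff linop_iff equibounded_def
proof (intro conjI allI)
  fix n
  assume f: "l1_fps f"
  obtain m C where "C \<ge> 0" "\<forall>f x. l1_fps f \<longrightarrow> P n (fcalc f x) \<le> l1_norm f * C * P m x"
    using P_fcalc_le by blast
  then show "\<exists>m C. C \<ge> 0 \<and> (\<forall>B\<in>{fcalc f}. \<forall>x. P n (B x) \<le> C * P m x)"
    using f l1_norm_nonneg[OF f] by (intro exI[of _ m] exI[of _ "l1_norm f * C"]) auto
qed (simp_all add: fcalc_add_right fcalc_scale_right)

lemma fcalc_add: "l1_fps f \<Longrightarrow> l1_fps g \<Longrightarrow> fcalc (f + g) x = fcalc f x + fcalc g x"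
  by (rule fcalc_eqI) (simp_all add: l1_fps_add partial_calc_add tends_add fcalc_tends)

lemma fcalc_cmult: "l1_fps f \<Longrightarrow> fcalc (fps_const c * f) x = sc c (fcalc f x)"
  by (rule fcalc_eqI) (simp_all add: l1_fps_cmult partial_calc_cmult tends_scale fcalc_tends)

lemma fcalc_uminus: "l1_fps f \<Longrightarrow> fcalc (- f) x = - fcalc f x"
  using fcalc_cmult[of f "-1" x] by (simp flip: fps_const_neg)

lemma fcalc_diff: "l1_fps f \<Longrightarrow> l1_fps g \<Longrightarrow> fcalc (f - g) x = fcalc f x - fcalc g x"
  using fcalc_add[of f "- g" x] fcalc_uminus[of g x] l1_fps_uminus[of g] by simp

lemma fcalc_0: "fcalc 0 x = 0"
  using fcalc_cmult[OF l1_fps_1, of 0 x] by simp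

lemma fcalc_1: "fcalc 1 x = x"
proof (rule fcalc_eqI[OF l1_fps_1])
  have "partial_calc 1 N x = x" if "N \<ge> 1" for N
  proof -
    have "partial_calc 1 N x = (\<Sum>k\<in>{0}. sc (fps_nth (1::complex fps) k) ((A ^^ k) x))"
      unfolding partial_calc_def by (rule sum.mono_neutral_right) (use that in auto)
    then show ?thesis
      by simp
  qed
  then show "tends (\<lambda>N. partial_calc 1 N x) x sequentially"
    by (intro tends_cong[OF _ tends_const]) (auto intro: eventually_sequentiallyI[of 1])
qed

lemma fcalc_const: "fcalc (fps_const c) x = sc c x"
  using fcalc_cmult[OF l1_fps_1, of c x] fcalc_1 by simp

lemma fcalc_X_mult:
  assumes f: "l1_fps f"
  shows "fcalc (fps_X * f) x = A (fcalc f x)"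
proof -
  have shift: "partial_calc (fps_X * f) (Suc N) x = A (partial_calc f N x)" for N
  proof -
    have "partial_calc (fps_X * f) (Suc N) x = (\<Sum>k<N. sc (fps_nth f k) ((A ^^ Suc k) x))"
      unfolding partial_calc_def by (subst sum.lessThan_Suc_shift) simp
    also have "\<dots> = A (partial_calc f N x)"
      unfolding partial_calc_def by (simp add: linop_sum[OF linop_A] linop_scale[OF linop_A])
    finally show ?thesis .
  qed
  have "tends (\<lambda>N. partial_calc (fps_X * f) (Suc N) x) (fcalc (fps_X * f) x) sequentially"
    using fcalc_tends[OF l1_fps_X_mult[OF f]] unfolding ftends_def by (auto intro: LIMSEQ_Suc)
  moreover have "tends (\<lambda>N. A (partial_calc f N x)) (A (fcalc f x)) sequentially"
    by (rule tends_Lop[OF A_Lop fcalc_tends[OF f]])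
  ultimately show ?thesis
    unfolding shift using tends_unique trivial_limit_sequentially by blast
qed

lemma fcalc_X: "fcalc fps_X x = A x"
  using fcalc_X_mult[OF l1_fps_1] fcalc_1 by simp

lemma fcalc_X_power_mult: "l1_fps f \<Longrightarrow> fcalc (fps_X ^ n * f) x = (A ^^ n) (fcalc f x)"
proof (induction n)
  case (Suc n)
  have "fcalc (fps_X ^ Suc n * f) x = fcalc (fps_X * (fps_X ^ n * f)) x"
    by (simp add: mult.assoc)
  also have "\<dots> = A (fcalc (fps_X ^ n * f) x)"
    by (rule fcalc_X_mult[OF l1_fps_X_power_mult[OF Suc.prems]])
  finally show ?case
    using Suc by simp
qed simp

lemma fps_cutoff_Suc: "fps_cutoff (Suc N) f = fps_cutoff N f + fps_const (fps_nth f N) * fps_X ^ N"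
  by (auto simp: fps_eq_iff less_Suc_eq)

lemma fcalc_cutoff_mult: "l1_fps g \<Longrightarrow> fcalc (fps_cutoff N f * g) x = partial_calc f N (fcalc g x)"
proof (induction N)
  case (Suc N)
  have "fps_cutoff (Suc N) f * g = fps_cutoff N f * g + fps_const (fps_nth f N) * (fps_X ^ N * g)"
    by (simp add: fps_cutoff_Suc algebra_simps)
  then have "fcalc (fps_cutoff (Suc N) f * g) x
      = fcalc (fps_cutoff N f * g) x + sc (fps_nth f N) ((A ^^ N) (fcalc g x))"
    using Suc.prems l1_fps_mult_l1_norm_le(1)[OF l1_fps_cutoff]
    by (simp add: fcalc_add l1_fps_cmult l1_fps_X_power_mult fcalc_cmult fcalc_X_power_mult)
  then show ?case
    using Suc by (simp add: partial_calc_def)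
qed (simp add: fcalc_0 partial_calc_def)

lemma fcalc_tends_zero:
  assumes "\<forall>\<^sub>F t in F. l1_fps (f t)" "((\<lambda>t. l1_norm (f t)) \<longlongrightarrow> 0) F"
  shows "tends (\<lambda>t. fcalc (f t) x) 0 F"
proof (rule tends_by_bound)
  fix n
  obtain m C where C: "C \<ge> 0" "\<forall>f x. l1_fps f \<longrightarrow> P n (fcalc f x) \<le> l1_norm f * C * P m x"
    using P_fcalc_le by blast
  have "((\<lambda>t. l1_norm (f t) * (C * P m x)) \<longlongrightarrow> 0) F"
    using tendsto_mult_left_zero[OF assms(2)] .
  moreover have "\<forall>\<^sub>F t in F. P n (fcalc (f t) x - 0) \<le> l1_norm (f t) * (C * P m x)"
    using assms(1) by eventually_elim (use C in \<open>simp add: mult.assoc\<close>)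
  ultimately show "\<exists>b. (b \<longlongrightarrow> 0) F \<and> (\<forall>\<^sub>F t in F. P n (fcalc (f t) x - 0) \<le> b t)"
    by blast
qed

lemma fcalc_mult:
  assumes f: "l1_fps f" and g: "l1_fps g"
  shows "fcalc (f * g) x = fcalc f (fcalc g x)"
proof -
  let ?r = "\<lambda>N. (f - fps_cutoff N f) * g"
  have r: "l1_fps (?r N)" "l1_norm (?r N) \<le> l1_norm (f - fps_cutoff N f) * l1_norm g" for N
    using l1_fps_mult_l1_norm_le[OF l1_fps_diff[OF f l1_fps_cutoff] g] by auto
  have "(\<lambda>N. l1_norm (?r N)) \<longlonglongrightarrow> 0"
  proof (rule tendsto_sandwich[OF _ _ tendsto_const])
    show "(\<lambda>N. l1_norm (f - fps_cutoff N f) * l1_norm g) \<longlonglongrightarrow> 0"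
      using tendsto_mult_left_zero[OF l1_norm_diff_cutoff_tendsto_0[OF f]] .
  qed (use r l1_norm_nonneg in auto)
  then have "tends (\<lambda>N. fcalc (?r N) x) 0 sequentially"
    using r by (intro fcalc_tends_zero) auto
  moreover have "fcalc (?r N) x = fcalc (f * g) x - partial_calc f N (fcalc g x)" for N
  proof -
    have "?r N = f * g - fps_cutoff N f * g"
      by (rule left_diff_distrib)
    then show ?thesis
      using l1_fps_mult_l1_norm_le(1)[OF _ g] f l1_fps_cutoff
      by (simp add: fcalc_diff fcalc_cutoff_mult[OF g])
  qed
  ultimately have "tends (\<lambda>N. partial_calc f N (fcalc g x)) (fcalc (f * g) x) sequentially"
    by (simp add: tends_iff_diff_tends_zero[of _ "fcalc (f * g) x"] ftends_def P_diff_commute)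
  then show ?thesis
    by (rule fcalc_eqI[OF f, symmetric])
qed

lemma equibounded_fcalc_l1_ball: "equibounded {fcalc f | f. l1_fps f \<and> l1_norm f \<le> 1}"
  unfolding equibounded_def
proof
  fix n
  obtain m C where C: "C \<ge> 0" "\<forall>f x. l1_fps f \<longrightarrow> P n (fcalc f x) \<le> l1_norm f * C * P m x"
    using P_fcalc_le by blast
  have "P n (fcalc f x) \<le> C * P m x" if "l1_fps f" "l1_norm f \<le> 1" for f x
  proof -
    have "P n (fcalc f x) \<le> l1_norm f * (C * P m x)"
      using C(2) that(1) by (simp add: mult.assoc)
    also have "\<dots> \<le> C * P m x"
      using that l1_norm_nonneg C(1) by (simp add: mult_left_le_one_le)
    finally show ?thesis .
  qed
  then show "\<exists>m C. C \<ge> 0 \<and> (\<forall>B\<in>{fcalc f | f. l1_fps f \<and> l1_norm f \<le> 1}. \<forall>x. P n (B x) \<le> C * P m x)"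
    using C(1) by blast
qed

lemma funpow_scale_fcalc:
  assumes f: "l1_fps f"
  shows "(\<lambda>x. sc \<mu> (fcalc f x)) ^^ k = fcalc (fps_const (\<mu> ^ k) * f ^ k)"
proof (induction k)
  case (Suc k)
  have fk: "l1_fps (fps_const (\<mu> ^ k) * f ^ k)"
    using l1_fps_cmult l1_fps_power_l1_norm_le(1)[OF f] by blast
  have "(\<lambda>x. sc \<mu> (fcalc f x)) ^^ Suc k = (\<lambda>x. sc \<mu> (fcalc f (fcalc (fps_const (\<mu> ^ k) * f ^ k) x)))"
    using Suc by (simp add: comp_def)
  also have "\<dots> = fcalc (fps_const \<mu> * (f * (fps_const (\<mu> ^ k) * f ^ k)))"
    using fcalc_mult[OF f fk] fcalc_cmult[OF l1_fps_mult_l1_norm_le(1)[OF f fk]] by (simp add: fun_eq_iff)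
  also have "fps_const \<mu> * (f * (fps_const (\<mu> ^ k) * f ^ k)) = fps_const (\<mu> ^ Suc k) * f ^ Suc k"
    by (simp add: algebra_simps flip: fps_const_mult)
  finally show ?case .
qed (simp add: fun_eq_iff fcalc_1)

lemma fcalc_in_L0:
  assumes f: "l1_fps f"
  shows "fcalc f \<in> L0 sc P"
proof -
  define \<mu> :: complex where "\<mu> = of_real (1 / (l1_norm f + 1))"
  have norm_f: "l1_norm f \<ge> 0"
    using l1_norm_nonneg[OF f] .
  have "\<mu> \<noteq> 0"
    unfolding \<mu>_def of_real_eq_0_iff using norm_f by simp
  have "cmod \<mu> = 1 / (l1_norm f + 1)"
    unfolding \<mu>_def norm_of_real using norm_f by simp
  then have "cmod \<mu> * l1_norm f \<le> 1"
    using norm_f by (simp add: divide_le_eq_1)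
  have "l1_norm (fps_const (\<mu> ^ k) * f ^ k) \<le> 1" for k
  proof -
    have "l1_norm (fps_const (\<mu> ^ k) * f ^ k) = cmod \<mu> ^ k * l1_norm (f ^ k)"
      using l1_norm_cmult[OF l1_fps_power_l1_norm_le(1)[OF f]] by (simp add: norm_power)
    also have "\<dots> \<le> (cmod \<mu> * l1_norm f) ^ k"
      using l1_fps_power_l1_norm_le(2)[OF f] by (simp add: mult_left_mono power_mult_distrib)
    also have "\<dots> \<le> 1"
      using \<open>cmod \<mu> * l1_norm f \<le> 1\<close> norm_f by (simp add: power_le_one)
    finally show ?thesis .
  qed
  then have "range (\<lambda>k. (\<lambda>x. sc \<mu> (fcalc f x)) ^^ k) \<subseteq> {fcalc g | g. l1_fps g \<and> l1_norm g \<le> 1}"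
    using l1_fps_cmult l1_fps_power_l1_norm_le(1)[OF f] by (auto simp: funpow_scale_fcalc[OF f])
  then have "equibounded (range (\<lambda>k. (\<lambda>x. sc \<mu> (fcalc f x)) ^^ k))"
    by (rule equibounded_subset[OF equibounded_fcalc_l1_ball])
  then show ?thesis
    using fcalc_Lop[OF f] \<open>\<mu> \<noteq> 0\<close> unfolding L0_def equicont_iff_equibounded by blast
qed

definition calc_invertible :: "complex fps \<Rightarrow> bool" where
  "calc_invertible W \<longleftrightarrow> (\<exists>R\<in>L0 sc P. (\<forall>x. fcalc W (R x) = x) \<and> (\<forall>x. R (fcalc W x) = x))"

lemma Some_in_resolvent_set_fcalc_iff:
  assumes "l1_fps h"
  shows "Some z \<in> resolvent_set sc P UNIV (fcalc h) \<longleftrightarrow> calc_invertible (fps_const z - h)"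
  unfolding Some_in_resolvent_set_UNIV_iff calc_invertible_def
  using assms by (simp add: fcalc_diff l1_fps_const fcalc_const)

lemma Some_in_resolvent_set_A_iff:
  "Some l \<in> resolvent_set sc P UNIV A \<longleftrightarrow> calc_invertible (fps_const l - fps_X)"
proof -
  have "fcalc fps_X = A"
    by (simp add: fun_eq_iff fcalc_X)
  then show ?thesis
    using Some_in_resolvent_set_fcalc_iff[OF l1_fps_X] by simp
qed

lemma fcalc_commute: "l1_fps f \<Longrightarrow> l1_fps g \<Longrightarrow> fcalc f (fcalc g x) = fcalc g (fcalc f x)"
  by (metis fcalc_mult mult.commute)

lemma calc_inverse_commute:
  assumes "l1_fps W" "l1_fps h" "\<And>x. fcalc W (R x) = x" "\<And>x. R (fcalc W x) = x"
  shows "R (fcalc h y) = fcalc h (R y)"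
  by (metis assms fcalc_commute)

lemma calc_invertible_if_fps_inverse:
  assumes "l1_fps W" "l1_fps H" "W * H = 1"
  shows "calc_invertible W"
  unfolding calc_invertible_def
  using assms fcalc_in_L0[of H] fcalc_mult[of W H] fcalc_mult[of H W] fcalc_1
  by (metis mult.commute)

lemma calc_invertible_mult_fps_invertible:
  assumes W: "l1_fps W" "calc_invertible W" and G: "l1_fps G" "l1_fps H" "G * H = 1"
  shows "calc_invertible (W * G)"
proof -
  obtain R where R: "R \<in> L0 sc P" "\<And>x. fcalc W (R x) = x" "\<And>x. R (fcalc W x) = x"
    using W(2) unfolding calc_invertible_def by blast
  have inverse: "fcalc (W * G) (fcalc H (R x)) = x" "fcalc H (R (fcalc (W * G) x)) = x" for x
    using fcalc_mult fcalc_1 R(2,3) calc_inverse_commute[OF W(1) G(1) R(2,3)] W(1) G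
    by (metis mult.commute)+
  have "(\<lambda>x. fcalc H (R x)) \<in> L0 sc P"
    using L0_comp_commuting[OF fcalc_in_L0[OF G(2)] R(1)] calc_inverse_commute[OF W(1) G(2) R(2,3)]
    by metis
  then show ?thesis
    unfolding calc_invertible_def by (rule bexI[rotated]) (use inverse in auto)
qed

lemma calc_invertible_left_factor:
  assumes W: "l1_fps W" and G: "l1_fps G" and WG: "calc_invertible (W * G)"
  shows "calc_invertible W"
proof -
  have WG_l1: "l1_fps (W * G)"
    using l1_fps_mult_l1_norm_le(1)[OF W G] .
  obtain R where R: "R \<in> L0 sc P" "\<And>x. fcalc (W * G) (R x) = x" "\<And>x. R (fcalc (W * G) x) = x"
    using WG unfolding calc_invertible_def by blast
  have commute: "R (fcalc G x) = fcalc G (R x)" for x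
    using calc_inverse_commute[OF WG_l1 G R(2,3)] .
  have inverse: "fcalc W (fcalc G (R x)) = x" "fcalc G (R (fcalc W x)) = x" for x
  proof -
    show "fcalc W (fcalc G (R x)) = x"
      using R(2) by (simp flip: fcalc_mult[OF W G])
    have "fcalc G (R (fcalc W x)) = R (fcalc (W * G) x)"
      by (simp add: commute fcalc_mult[OF G W] mult.commute)
    then show "fcalc G (R (fcalc W x)) = x"
      using R(3) by simp
  qed
  have "(\<lambda>x. fcalc G (R x)) \<in> L0 sc P"
    using L0_comp_commuting[OF fcalc_in_L0[OF G] R(1)] commute by metis
  then show ?thesis
    unfolding calc_invertible_def by (rule bexI[rotated]) (use inverse in auto)
qed

lemma log_in_resolvent_set:
  assumes "Some (exp l) \<in> resolvent_set sc P UNIV (fcalc (fps_exp 1))"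
  shows "Some l \<in> resolvent_set sc P UNIV A"
proof -
  have "calc_invertible ((fps_const l - fps_X) * exp_quotient_fps l)"
    using assms unfolding Some_in_resolvent_set_fcalc_iff[OF l1_fps_exp] exp_quotient_fps_factorization .
  then have "calc_invertible (fps_const l - fps_X)"
    by (rule calc_invertible_left_factor[OF l1_fps_diff[OF l1_fps_const l1_fps_X] l1_fps_exp_quotient_fps])
  then show ?thesis
    unfolding Some_in_resolvent_set_A_iff .
qed

lemma exp_in_resolvent_set:
  assumes logs: "\<And>l. exp l = z \<Longrightarrow> Some l \<in> resolvent_set sc P UNIV A"
  shows "Some z \<in> resolvent_set sc P UNIV (fcalc (fps_exp 1))"
proof -
  have "calc_invertible (fps_const z - fps_exp 1)"
  proof (cases "\<exists>l. exp l = z \<and> norm l \<le> 1")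
    case True
    then obtain l where l: "exp l = z" "norm l \<le> 1"
      by blast
    have W: "l1_fps (fps_const l - fps_X)" "calc_invertible (fps_const l - fps_X)"
      using logs[OF l(1)] unfolding Some_in_resolvent_set_A_iff
      by (simp_all add: l1_fps_diff l1_fps_const l1_fps_X)
    have "pi > 1" and radius: "fps_conv_radius (exp_quotient_fps l) > 1"
      using pi_gt3 by (simp_all add: fps_conv_radius_exp_quotient_fps)
    have "eval_fps (exp_quotient_fps l) w \<noteq> 0" if "norm w < pi" for w
      using exp_quotient_nonzero[OF _ that, of l] l(2) pi_gt3 by (simp add: eval_exp_quotient_fps)
    note inverse = l1_fps_inverse[OF \<open>pi > 1\<close> radius this]
    from calc_invertible_mult_fps_invertible[OF W l1_fps_exp_quotient_fps inverse]
    show ?thesis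
      unfolding exp_quotient_fps_factorization l(1) .
  next
    case False
    obtain \<rho> where \<rho>: "\<rho> > 1" "\<And>w. norm w < \<rho> \<Longrightarrow> exp w \<noteq> z"
      using exp_omits_disc_without_small_log[OF False] by blast
    have radius: "fps_conv_radius (fps_const z - fps_exp 1 :: complex fps) > 1"
      using fps_conv_radius_diff[of "fps_const z" "fps_exp (1::complex)"] by simp
    have "eval_fps (fps_const z - fps_exp 1) w \<noteq> 0" if "norm w < \<rho>" for w
      using \<rho>(2)[OF that] by (simp add: eval_fps_diff)
    note inverse = l1_fps_inverse[OF \<rho>(1) radius this]
    then show ?thesis
      by (intro calc_invertible_if_fps_inverse) (simp_all add: l1_fps_diff l1_fps_const l1_fps_exp)
  qed
  then show ?thesis
    unfolding Some_in_resolvent_set_fcalc_iff[OF l1_fps_exp] .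
qed

theorem spectral_bound_eq_elog_spectral_radius_exp:
  "spectral_bound sc P UNIV A = elog (spectral_radius sc P (fcalc (fps_exp 1)))"
proof -
  define \<Lambda> where "\<Lambda> = {l. Some l \<in> spectrum_ext sc P UNIV A}"
  have "None \<notin> spectrum_ext sc P UNIV (fcalc (fps_exp 1))"
    unfolding spectrum_ext_def using None_in_resolvent_set_UNIV[OF fcalc_in_L0[OF l1_fps_exp]] by simp
  moreover have "Some z \<in> spectrum_ext sc P UNIV (fcalc (fps_exp 1)) \<longleftrightarrow> z \<in> exp ` \<Lambda>" for z
  proof
    assume "Some z \<in> spectrum_ext sc P UNIV (fcalc (fps_exp 1))"
    then obtain l where "exp l = z" "Some l \<notin> resolvent_set sc P UNIV A"
      using exp_in_resolvent_set unfolding spectrum_ext_def by blast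
    then show "z \<in> exp ` \<Lambda>"
      unfolding \<Lambda>_def spectrum_ext_def by blast
  next
    assume "z \<in> exp ` \<Lambda>"
    then show "Some z \<in> spectrum_ext sc P UNIV (fcalc (fps_exp 1))"
      using log_in_resolvent_set unfolding \<Lambda>_def spectrum_ext_def by blast
  qed
  ultimately have "spectrum_ext sc P UNIV (fcalc (fps_exp 1)) = Some ` exp ` \<Lambda>"
    by (auto simp: image_iff) (metis option.exhaust)
  then have "spectral_radius sc P (fcalc (fps_exp 1)) = Sup ((\<lambda>l. ereal (exp (Re l))) ` \<Lambda>)"
    unfolding spectral_radius_def by (simp add: image_image)
  moreover have "spectral_bound sc P UNIV A = Sup ((\<lambda>l. ereal (Re l)) ` \<Lambda>)"
    unfolding spectral_bound_def \<Lambda>_def by (rule arg_cong[of _ _ Sup]) auto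
  ultimately show ?thesis
    by (simp add: elog_Sup_exp)
qed

definition exp_op :: "real \<Rightarrow> 'a \<Rightarrow> 'a" where
  "exp_op u = fcalc (fps_exp (of_real u))"

lemma tends_exp_op:
  assumes "(g \<longlongrightarrow> u) F"
  shows "tends (\<lambda>t. exp_op (g t) x) (exp_op u x) F"
proof -
  have "tends (\<lambda>t. fcalc (fps_exp (of_real (g t)) - fps_exp (of_real u)) x) 0 F"
    by (intro fcalc_tends_zero l1_norm_fps_exp_diff_tendsto_0 assms always_eventually allI
        l1_fps_diff l1_fps_exp)
  then show ?thesis
    using tends_iff_diff_tends_zero[of "\<lambda>t. exp_op (g t) x" "exp_op u x"]
    unfolding exp_op_def by (simp add: fcalc_diff l1_fps_exp)
qed

lemma tends_exp_op_derivative: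
  "tends (\<lambda>h. sc (of_real (1 / h)) (exp_op (u - h) x - exp_op u x) + A (exp_op u x)) 0 (at_right 0)"
proof -
  let ?f = "\<lambda>h. fps_const (1 / of_real h) * (fps_exp (of_real (u - h)) - fps_exp (of_real u))
      + fps_X * fps_exp (of_real u)"
  have "tends (\<lambda>h. fcalc (?f h) x) 0 (at_right 0)"
    by (intro fcalc_tends_zero l1_norm_fps_exp_difference_quotient_tendsto_0 always_eventually allI
        l1_fps_add l1_fps_cmult l1_fps_diff l1_fps_exp l1_fps_X_mult)
  moreover have "fcalc (?f h) x = sc (of_real (1 / h)) (exp_op (u - h) x - exp_op u x) + A (exp_op u x)" for h
    unfolding exp_op_def of_real_divide of_real_1
    by (simp only: fcalc_add[OF l1_fps_cmult[OF l1_fps_diff[OF l1_fps_exp l1_fps_exp]]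
          l1_fps_X_mult[OF l1_fps_exp]]
        fcalc_cmult[OF l1_fps_diff[OF l1_fps_exp l1_fps_exp]] fcalc_diff[OF l1_fps_exp l1_fps_exp]
        fcalc_X_mult[OF l1_fps_exp])
  ultimately show ?thesis
    by simp
qed

end

section \<open>Functions with vanishing right derivative\<close>

lemma le_add_slope_if_upper_right_derivative_le:
  fixes \<phi> :: "real \<Rightarrow> real"
  assumes "a \<le> b" and cont: "continuous_on {a..b} \<phi>"
    and deriv: "\<And>r. a \<le> r \<Longrightarrow> r < b \<Longrightarrow> \<forall>\<^sub>F h in at_right 0. \<phi> (r + h) \<le> \<phi> r + \<epsilon> * h"
  shows "\<phi> b \<le> \<phi> a + \<epsilon> * (b - a)"
proof -
  define S where "S = {r \<in> {a..b}. \<phi> r \<le> \<phi> a + \<epsilon> * (r - a)}"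
  have "closed S"
    unfolding S_def by (rule continuous_on_closed_Collect_le[OF cont]) (auto intro!: continuous_intros)
  moreover have "a \<in> S" "bdd_above S"
    unfolding S_def using \<open>a \<le> b\<close> by (auto intro: bdd_aboveI[of _ b])
  ultimately have "Sup S \<in> S"
    using closed_contains_Sup by blast
  then obtain \<sigma> where \<sigma>: "\<sigma> \<in> S" "\<And>r. r \<in> S \<Longrightarrow> r \<le> \<sigma>"
    using cSup_upper[OF _ \<open>bdd_above S\<close>] by blast
  have "\<sigma> = b"
  proof (rule ccontr)
    assume "\<sigma> \<noteq> b"
    with \<sigma>(1) have "a \<le> \<sigma>" "\<sigma> < b" "\<phi> \<sigma> \<le> \<phi> a + \<epsilon> * (\<sigma> - a)"
      unfolding S_def by auto
    moreover have "\<forall>\<^sub>F h in at_right 0. h < b - \<sigma>"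
      using \<open>\<sigma> < b\<close> unfolding eventually_at_right_field by (intro exI[of _ "b - \<sigma>"]) auto
    ultimately have "\<forall>\<^sub>F h in at_right 0. 0 < h \<and> h < b - \<sigma> \<and> \<phi> (\<sigma> + h) \<le> \<phi> \<sigma> + \<epsilon> * h"
      using deriv[of \<sigma>] eventually_at_right_less[of 0] by (auto intro: eventually_conj)
    then obtain h where h: "0 < h" "h < b - \<sigma>" "\<phi> (\<sigma> + h) \<le> \<phi> \<sigma> + \<epsilon> * h"
      using eventually_happens'[OF trivial_limit_at_right_real] by blast
    then have "\<sigma> + h \<in> S"
      unfolding S_def using \<open>a \<le> \<sigma>\<close> \<open>\<phi> \<sigma> \<le> \<phi> a + \<epsilon> * (\<sigma> - a)\<close> by (auto simp: algebra_simps)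
    then show False
      using \<sigma>(2) h(1) by fastforce
  qed
  then show ?thesis
    using \<sigma>(1) unfolding S_def by simp
qed

lemma le_if_upper_right_derivative_nonpos:
  fixes \<phi> :: "real \<Rightarrow> real"
  assumes "a \<le> b" and cont: "continuous_on {a..b} \<phi>"
    and deriv: "\<And>r \<epsilon>. a \<le> r \<Longrightarrow> r < b \<Longrightarrow> \<epsilon> > 0 \<Longrightarrow> \<forall>\<^sub>F h in at_right 0. \<phi> (r + h) \<le> \<phi> r + \<epsilon> * h"
  shows "\<phi> b \<le> \<phi> a"
proof (rule field_le_epsilon)
  fix e :: real
  assume "e > 0"
  then have "\<phi> b \<le> \<phi> a + e / (b - a + 1) * (b - a)"
    using \<open>a \<le> b\<close> by (intro le_add_slope_if_upper_right_derivative_le[OF _ cont] deriv) simp_all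
  also have "e / (b - a + 1) * (b - a) \<le> e"
    using \<open>e > 0\<close> \<open>a \<le> b\<close> by (simp add: field_simps)
  finally show "\<phi> b \<le> \<phi> a + e"
    by simp
qed

context frechet_space
begin

lemma eq_if_right_derivative_zero:
  assumes "a \<le> b"
    and cont: "\<And>r. a \<le> r \<Longrightarrow> r \<le> b \<Longrightarrow> tends w (w r) (at r within {a..b})"
    and deriv: "\<And>r. a \<le> r \<Longrightarrow> r < b \<Longrightarrow> tends (\<lambda>h. sc (of_real (1 / h)) (w (r + h) - w r)) 0 (at_right 0)"
  shows "w b = w a"
proof -
  have "P n (w b - w a) \<le> P n (w a - w a)" for n
  proof (rule le_if_upper_right_derivative_nonpos[OF \<open>a \<le> b\<close>])
    show "continuous_on {a..b} (\<lambda>s. P n (w s - w a))"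
      unfolding continuous_on_def
      by (auto intro!: tends_imp_tendsto_P[OF tends_diff[OF cont tends_const]])
    fix r \<epsilon> :: real
    assume r: "a \<le> r" "r < b" and "\<epsilon> > 0"
    have "\<forall>\<^sub>F h in at_right 0. P n (sc (of_real (1 / h)) (w (r + h) - w r) - 0) < \<epsilon>"
      by (rule order_tendstoD(2)[OF tendsD[OF deriv[OF r]] \<open>\<epsilon> > 0\<close>])
    then show "\<forall>\<^sub>F h in at_right 0. P n (w (r + h) - w a) \<le> P n (w r - w a) + \<epsilon> * h"
      using eventually_at_right_less[of 0]
    proof eventually_elim
      case (elim h)
      moreover have "cmod (1 / complex_of_real h) = 1 / h"
        using elim(2) by (simp add: norm_divide)
      ultimately have "P n (w (r + h) - w r) / h < \<epsilon>"
        by (simp add: P_scale)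
      then have "P n (w (r + h) - w r) < \<epsilon> * h"
        using elim(2) by (simp add: pos_divide_less_eq)
      then show ?case
        using P_triangle_diff[of n "w (r + h)" "w a" "w r"] by linarith
    qed
  qed
  then show ?thesis
    using P_separating[of "w b - w a"] by simp
qed

end

section \<open>Semigroups with a power-bounded generator\<close>

locale power_bounded_generator = frechet_space +
  fixes T :: "real \<Rightarrow> 'a \<Rightarrow> 'a"
  assumes c0: "c0_semigroup sc P T"
    and exp_equicont: "exp_equicont sc P T"
    and gen_dom_UNIV: "gen_dom sc P T = UNIV"
    and equicont_gen_powers: "equicont sc P (range (\<lambda>n. gen sc P T ^^ n))"
begin

lemma T_Lop: "t \<ge> 0 \<Longrightarrow> T t \<in> Lop sc P"
  using c0 unfolding c0_semigroup_def by auto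

lemma T_0: "T 0 x = x"
  using c0 unfolding c0_semigroup_def by auto

lemma T_add: "t \<ge> 0 \<Longrightarrow> s \<ge> 0 \<Longrightarrow> T (t + s) x = T t (T s x)"
  using c0 unfolding c0_semigroup_def by auto

lemma T_continuous: "t \<ge> 0 \<Longrightarrow> tends (\<lambda>s. T s x) (T t x) (at t within {0..})"
  using c0 unfolding c0_semigroup_def by auto

lemma linop_T: "t \<ge> 0 \<Longrightarrow> linop (T t)"
  using T_Lop by (simp add: Lop_iff)

lemma T_continuous_at_0: "tends (\<lambda>h. T h x) x (at_right 0)"
  using T_continuous[of 0 x] unfolding T_0 ftends_def by (auto intro: tendsto_within_subset)

lemma tends_gen: "tends (\<lambda>h. sc (of_real (1 / h)) (T h x - x)) (gen sc P T x) (at_right 0)"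
proof -
  obtain y where y: "tends (\<lambda>h. sc (of_real (1 / h)) (T h x - x)) y (at_right 0)"
    using gen_dom_UNIV unfolding gen_dom_def by blast
  then show ?thesis
    unfolding gen_def by (rule theI) (use y tends_unique[OF trivial_limit_at_right_real] in blast)
qed

lemma linop_gen: "linop (gen sc P T)"
  unfolding linop_iff
proof (intro conjI allI)
  fix x y
  have "\<forall>\<^sub>F h in at_right 0. sc (of_real (1 / h)) (T h x - x) + sc (of_real (1 / h)) (T h y - y)
      = sc (of_real (1 / h)) (T h (x + y) - (x + y))"
    using eventually_at_right_less[of 0]
    by eventually_elim (simp add: linop_add[OF linop_T] V.scale_right_diff_distrib V.scale_right_distrib algebra_simps)
  from tends_cong[OF this tends_add[OF tends_gen tends_gen]]
  show "gen sc P T (x + y) = gen sc P T x + gen sc P T y"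
    using tends_unique[OF trivial_limit_at_right_real tends_gen] by blast
next
  fix c x
  have "\<forall>\<^sub>F h in at_right 0. sc c (sc (of_real (1 / h)) (T h x - x))
      = sc (of_real (1 / h)) (T h (sc c x) - sc c x)"
    using eventually_at_right_less[of 0]
    by eventually_elim (simp add: linop_scale[OF linop_T] V.scale_right_diff_distrib mult.commute)
  from tends_cong[OF this tends_scale[OF tends_gen]]
  show "gen sc P T (sc c x) = sc c (gen sc P T x)"
    using tends_unique[OF trivial_limit_at_right_real tends_gen] by blast
qed

sublocale power_bounded sc P "gen sc P T"
  by unfold_locales
    (use linop_gen[unfolded linop_iff] equicont_gen_powers in \<open>simp_all add: equicont_iff_equibounded\<close>)

abbreviation A :: "'a \<Rightarrow> 'a" where
  "A \<equiv> gen sc P T"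

lemma T_equibounded_unit_interval: "equibounded {T t | t. 0 \<le> t \<and> t \<le> 1}"
proof -
  obtain \<omega> where "equibounded {(\<lambda>x. sc (of_real (exp (- \<omega> * t))) (T t x)) | t. t \<ge> 0}"
    using exp_equicont unfolding exp_equicont_def equicont_iff_equibounded by blast
  then have "equibounded {(\<lambda>x. sc c (B x)) | c B. cmod c \<le> exp \<bar>\<omega>\<bar> \<and>
      B \<in> {(\<lambda>x. sc (of_real (exp (- \<omega> * t))) (T t x)) | t. t \<ge> 0}}"
    by (rule equibounded_scale)
  moreover have "{T t | t. 0 \<le> t \<and> t \<le> 1} \<subseteq> {(\<lambda>x. sc c (B x)) | c B. cmod c \<le> exp \<bar>\<omega>\<bar> \<and>
      B \<in> {(\<lambda>x. sc (of_real (exp (- \<omega> * t))) (T t x)) | t. t \<ge> 0}}"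
  proof
    fix S
    assume "S \<in> {T t | t. 0 \<le> t \<and> t \<le> 1}"
    then obtain t where t: "S = T t" "0 \<le> t" "t \<le> 1"
      by blast
    have eq: "T t = (\<lambda>x. sc (of_real (exp (\<omega> * t))) (sc (of_real (exp (- \<omega> * t))) (T t x)))"
      by (simp add: fun_eq_iff flip: of_real_mult exp_add)
    have "\<omega> * t \<le> \<bar>\<omega>\<bar>"
      using t by (metis abs_ge_self abs_mult abs_of_nonneg mult_left_le order_trans abs_ge_zero)
    show "S \<in> {(\<lambda>x. sc c (B x)) | c B. cmod c \<le> exp \<bar>\<omega>\<bar> \<and>
        B \<in> {(\<lambda>x. sc (of_real (exp (- \<omega> * t))) (T t x)) | t. t \<ge> 0}}"
      unfolding t(1)
    proof (rule CollectI, rule exI[of _ "complex_of_real (exp (\<omega> * t))"],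
        rule exI[of _ "\<lambda>x. sc (of_real (exp (- \<omega> * t))) (T t x)"], intro conjI)
      show "T t = (\<lambda>x. sc (of_real (exp (\<omega> * t))) (sc (of_real (exp (- \<omega> * t))) (T t x)))"
        by (rule eq)
    qed (use t \<open>\<omega> * t \<le> \<bar>\<omega>\<bar>\<close> in auto)
  qed
  ultimately show ?thesis
    by (rule equibounded_subset)
qed

lemma tends_orbit:
  assumes "0 \<le> r" "r \<le> 1"
  shows "tends (\<lambda>s. T s (exp_op (1 - s) x)) (T r (exp_op (1 - r) x)) (at r within {0..1})"
proof -
  let ?y = "exp_op (1 - r) x"
  have unit: "\<forall>\<^sub>F s in at r within {0..1}. 0 \<le> s \<and> s \<le> (1 :: real)"
    by (auto simp: eventually_at_filter)
  have "((\<lambda>s. 1 - s) \<longlongrightarrow> 1 - r) (at r within {0..1})"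
    by (rule tendsto_diff[OF tendsto_const tendsto_ident_at])
  from tends_exp_op[OF this, of x]
  have "tends (\<lambda>s. exp_op (1 - s) x - ?y) 0 (at r within {0..1})"
    using tends_iff_diff_tends_zero[of "\<lambda>s. exp_op (1 - s) x"] by simp
  moreover have "\<forall>\<^sub>F s in at r within {0..1}. T s \<in> {T t | t. 0 \<le> t \<and> t \<le> 1}"
    using unit by eventually_elim blast
  ultimately have "tends (\<lambda>s. T s (exp_op (1 - s) x - ?y)) 0 (at r within {0..1})"
    by (intro tends_zero_equibounded[where B = T, OF T_equibounded_unit_interval])
  moreover have "tends (\<lambda>s. T s ?y) (T r ?y) (at r within {0..1})"
    unfolding ftends_def
  proof
    fix n
    show "((\<lambda>s. P n (T s ?y - T r ?y)) \<longlongrightarrow> 0) (at r within {0..1})"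
      by (rule tendsto_within_subset[OF tendsD[OF T_continuous[OF assms(1)]]]) auto
  qed
  ultimately have "tends (\<lambda>s. T s (exp_op (1 - s) x - ?y) + T s ?y) (0 + T r ?y) (at r within {0..1})"
    by (rule tends_add)
  moreover have "\<forall>\<^sub>F s in at r within {0..1}.
      T s (exp_op (1 - s) x - ?y) + T s ?y = T s (exp_op (1 - s) x)"
    using unit by eventually_elim (simp add: linop_diff[OF linop_T])
  ultimately show ?thesis
    by (simp add: tends_cong)
qed

lemma T_difference_quotient_decomposition:
  assumes "0 \<le> r" "0 \<le> h"
  shows "sc c (T (r + h) z - T r y)
    = T r ((sc c (T h y - y) - A y) + T h (sc c (z - y) + A y) - (T h (A y) - A y))"
proof -
  have lin: "linop (T h)" "linop (T r)"
    using assms by (simp_all add: linop_T)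
  have "(sc c (T h y - y) - A y) + T h (sc c (z - y) + A y) - (T h (A y) - A y)
      = sc c (T h y - y) + sc c (T h z - T h y)"
    by (simp add: linop_add[OF lin(1)] linop_scale[OF lin(1)] linop_diff[OF lin(1)] algebra_simps)
  also have "\<dots> = sc c (T h z - y)"
    by (simp flip: V.scale_right_distrib)
  finally show ?thesis
    using assms by (simp add: T_add linop_scale[OF lin(2)] linop_diff[OF lin(2)])
qed

lemma tends_orbit_derivative:
  assumes "0 \<le> r" "r < 1"
  shows "tends (\<lambda>h. sc (of_real (1 / h)) (T (r + h) (exp_op (1 - (r + h)) x) - T r (exp_op (1 - r) x)))
           0 (at_right 0)"
proof -
  define y where "y = exp_op (1 - r) x"
  let ?c = "\<lambda>h. sc (of_real (1 / h))"
  let ?e = "\<lambda>h. exp_op (1 - r - h) x"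
  have small: "\<forall>\<^sub>F h in at_right 0. 0 < h \<and> h \<le> (1 :: real)"
    unfolding eventually_at_right_field by (intro exI[of _ 1]) auto
  have t1: "tends (\<lambda>h. ?c h (T h y - y) - A y) 0 (at_right 0)"
    using tends_gen[of y] tends_iff_diff_tends_zero[of "\<lambda>h. ?c h (T h y - y)"] by simp
  have "\<forall>\<^sub>F h in at_right 0. T h \<in> {T t | t. 0 \<le> t \<and> t \<le> 1}"
    using small by eventually_elim auto
  from tends_zero_equibounded[where B = T, OF T_equibounded_unit_interval this
      tends_exp_op_derivative[of "1 - r" x, folded y_def]]
  have t2: "tends (\<lambda>h. T h (?c h (?e h - y) + A y)) 0 (at_right 0)" .
  have t3: "tends (\<lambda>h. T h (A y) - A y) 0 (at_right 0)"
    using T_continuous_at_0[of "A y"] tends_iff_diff_tends_zero[of "\<lambda>h. T h (A y)"] by simp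
  have "tends (\<lambda>h. T r ((?c h (T h y - y) - A y) + T h (?c h (?e h - y) + A y) - (T h (A y) - A y)))
      (T r (0 + 0 - 0)) (at_right 0)"
    by (rule tends_Lop[OF T_Lop[OF assms(1)] tends_diff[OF tends_add[OF t1 t2] t3]])
  moreover have "\<forall>\<^sub>F h in at_right 0.
      T r ((?c h (T h y - y) - A y) + T h (?c h (?e h - y) + A y) - (T h (A y) - A y))
      = ?c h (T (r + h) (exp_op (1 - (r + h)) x) - T r (exp_op (1 - r) x))"
    using small by eventually_elim
      (use assms(1) in \<open>simp add: y_def T_difference_quotient_decomposition diff_diff_eq\<close>)
  ultimately show ?thesis
    using linop_zero[OF linop_T[OF assms(1)]] by (simp add: tends_cong)
qed

lemma T_1_eq_exp_gen: "T 1 = fcalc (fps_exp 1)"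
proof
  fix x
  have "T 1 (exp_op (1 - 1) x) = T 0 (exp_op (1 - 0) x)"
    by (rule eq_if_right_derivative_zero[where w = "\<lambda>s. T s (exp_op (1 - s) x)"])
      (simp_all only: tends_orbit tends_orbit_derivative order_refl zero_le_one)
  then show "T 1 x = fcalc (fps_exp 1) x"
    unfolding exp_op_def by (simp add: T_0 fcalc_1)
qed

end

theorem proposition3p3:
  fixes sc :: "complex \<Rightarrow> 'a::ab_group_add \<Rightarrow> 'a"
    and P :: "nat \<Rightarrow> 'a \<Rightarrow> real"
    and T :: "real \<Rightarrow> 'a \<Rightarrow> 'a"
  assumes "frechet sc P"
    and "c0_semigroup sc P T"
    and "exp_equicont sc P T"
    and "gen_dom sc P T = UNIV"
    and "equicont sc P (range (\<lambda>n. (gen sc P T) ^^ n))"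
  shows "spectral_bound sc P (gen_dom sc P T) (gen sc P T) = elog (spectral_radius sc P (T 1))"
proof -
  interpret power_bounded_generator sc P T
    using assms by unfold_locales
  show ?thesis
    using spectral_bound_eq_elog_spectral_radius_exp by (simp add: gen_dom_UNIV T_1_eq_exp_gen)
qed

end
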